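(* Let $K$ be a field of characteristic zero and let $A_1 = K\langle X, Y \mid YX - XY = 1\rangle$ be the first Weyl algebra over $K$. Let $P, Q \in A_1$ with $m(P) = 1$ or $m(Q) = 1$. If $PQ - QP = 1$, then there exists a $K$-algebra automorphism $\tau$ of $A_1$ such that $P = \tau(Y)$ and $Q = \tau(X)$.
   Context: The Weyl algebra $A_1$ is $\mathbb{Z}$-graded, $A_1 = \bigoplus_{i\in\mathbb{Z}} A_{1,i}$ with $A_{1,i}A_{1,j}\subseteq A_{1,i+j}$, where, writing $H = YX$, one has $A_{1,0} = K[H]$ and, for $i \geq 1$, $A_{1,i} = K[H]X^i$ and $A_{1,-i} = K[H]Y^i$. For a nonzero element $a \in A_1$, its mass $m(a)$ is the number of nonzero homogeneous components of $a$ with respect to this grading. *)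

theory Defs
  imports Main "HOL-Algebra.QuotRing"
begin

text \<open>The first Weyl algebra A_1 = K<X,Y | YX - XY = 1> over a field K, realised through
its standard K-basis of normally ordered monomials X^i Y^j (i, j in nat).
An element is a finitely supported coefficient function c, standing for
the sum over i, j of c i j X^i Y^j.  The product is determined by the relation YX = XY + 1,
which gives the normal ordering rule (Leibniz rule)
  (X^a Y^b)(X^c Y^d) = sum over l of (b choose l) (c choose l) l! X^(a+c-l) Y^(b+d-l).\<close>

type_synonym 'a weyl = "nat \<Rightarrow> nat \<Rightarrow> 'a"

definition weyl_supp :: "'a::zero weyl \<Rightarrow> (nat \<times> nat) set" where
  "weyl_supp f = {(i, j). f i j \<noteq> 0}"

definition weyl_carrier :: "'a::field weyl set" where
  "weyl_carrier = {f. finite (weyl_supp f)}"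

definition weyl_zero :: "'a::field weyl" where
  "weyl_zero = (\<lambda>i j. 0)"

definition weyl_one :: "'a::field weyl" where
  "weyl_one = (\<lambda>i j. if i = 0 \<and> j = 0 then 1 else 0)"

definition weyl_X :: "'a::field weyl" where
  "weyl_X = (\<lambda>i j. if i = 1 \<and> j = 0 then 1 else 0)"

definition weyl_Y :: "'a::field weyl" where
  "weyl_Y = (\<lambda>i j. if i = 0 \<and> j = 1 then 1 else 0)"

definition weyl_add :: "'a::field weyl \<Rightarrow> 'a weyl \<Rightarrow> 'a weyl" where
  "weyl_add f g = (\<lambda>i j. f i j + g i j)"

definition weyl_sub :: "'a::field weyl \<Rightarrow> 'a weyl \<Rightarrow> 'a weyl" where
  "weyl_sub f g = (\<lambda>i j. f i j - g i j)"

definition weyl_smult :: "'a::field \<Rightarrow> 'a weyl \<Rightarrow> 'a weyl" where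
  "weyl_smult c f = (\<lambda>i j. c * f i j)"

definition weyl_mult :: "'a::field weyl \<Rightarrow> 'a weyl \<Rightarrow> 'a weyl" where
  "weyl_mult f g = (\<lambda>i j.
     \<Sum>(a, b)\<in>weyl_supp f. \<Sum>(c, d)\<in>weyl_supp g. \<Sum>l\<in>{..b}.
       if l \<le> c \<and> a + c - l = i \<and> b + d - l = j
       then of_nat ((b choose l) * (c choose l) * fact l) * f a b * g c d
       else 0)"

definition weyl_ring :: "('a::field weyl) ring" where
  "weyl_ring = \<lparr>carrier = weyl_carrier, monoid.mult = weyl_mult, one = weyl_one,
                zero = weyl_zero, add = weyl_add\<rparr>"

definition weyl_K_automorphism :: "('a::field weyl \<Rightarrow> 'a weyl) \<Rightarrow> bool" where
  "weyl_K_automorphism \<tau> \<longleftrightarrow>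
     \<tau> \<in> ring_iso weyl_ring weyl_ring \<and>
     (\<forall>c. \<forall>f\<in>weyl_carrier. \<tau> (weyl_smult c f) = weyl_smult c (\<tau> f))"

definition weyl_component :: "int \<Rightarrow> 'a::field weyl \<Rightarrow> 'a weyl" where
  "weyl_component d f = (\<lambda>i j. if int i - int j = d then f i j else 0)"

definition weyl_mass :: "'a::field weyl \<Rightarrow> nat" where
  "weyl_mass f = card {d::int. weyl_component d f \<noteq> weyl_zero}"

end

theory Submission
  imports Defs "HOL-Computational_Algebra.Polynomial"
begin

text \<open>
  A homogeneous element \<open>a\<close> of degree \<open>d\<close> acts on \<open>K[t]\<close> (with \<open>X\<close> acting as multiplication
  by \<open>t\<close> and \<open>Y\<close> as \<open>d/dt\<close>) by \<open>t ^ n \<mapsto> A(n) t ^ (n + d)\<close> for a polynomial \<open>A\<close>.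
  If \<open>[a, b] = c \<noteq> 0\<close>, comparing diagonal entries shows that \<open>G(x) = A(x) B(x + d)\<close>, with \<open>B\<close>
  the polynomial of the degree \<open>-d\<close> part of \<open>b\<close>, satisfies \<open>G(x - d) - G(x) = c\<close>. Hence \<open>G\<close>
  is linear with slope \<open>-c/d\<close>, and the diagonal identity at \<open>n = 0, 1\<close> forces \<open>d = \<plusminus>1\<close> and
  then \<open>a = \<lambda>X\<close> or \<open>a = \<lambda>Y\<close>.

  Now let \<open>[P, Q] = 1\<close> with, say, \<open>P = \<lambda>X\<close>. Then \<open>Q + \<lambda>\<inverse> Y\<close> commutes with \<open>X\<close>, so it is a
  polynomial in \<open>X\<close>; thus \<open>X\<close> and \<open>Y\<close> are polynomials in \<open>P\<close> and \<open>Q\<close>, and the endomorphism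
  \<open>\<tau>\<close> with \<open>\<tau>(X) = Q\<close>, \<open>\<tau>(Y) = P\<close> is surjective. It is injective because \<open>A\<^sub>1\<close> is simple:
  commutators with \<open>X\<close> and \<open>Y\<close> lower the degree of any nonzero element down to a nonzero
  constant.
\<close>

section \<open>Normal ordering\<close>

definition normal_coeff :: "nat \<Rightarrow> nat \<Rightarrow> nat \<Rightarrow> nat" where
  "normal_coeff b c l = (b choose l) * (c choose l) * fact l"

lemma normal_coeff_0 [simp]: "normal_coeff b c 0 = 1"
  by (simp add: normal_coeff_def)

lemma normal_coeff_eq_0: "b < l \<or> c < l \<Longrightarrow> normal_coeff b c l = 0"
  by (auto simp: normal_coeff_def binomial_eq_0)

lemma normal_coeff_Suc:
  "normal_coeff b (Suc c) (Suc l) = normal_coeff b c (Suc l) + normal_coeff b c l * (b - l)"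
proof -
  have "normal_coeff b (Suc c) (Suc l) =
      normal_coeff b c (Suc l) + ((b choose Suc l) * Suc l) * (c choose l) * fact l"
    by (simp add: normal_coeff_def algebra_simps)
  also have "(b choose Suc l) * Suc l = (b choose l) * (b - l)"
    by (metis binomial_absorb_comp binomial_absorption mult.commute)
  finally show ?thesis
    by (simp add: normal_coeff_def mult_ac)
qed

lemma of_nat_mult_middle: "(a::'r::ring_1) * (of_nat k * b) = of_nat k * (a * b)"
  by (metis mult.assoc mult_of_nat_commute)

context
  fixes x y :: "'r::ring_1"
  assumes weyl_rel: "y * x = x * y + 1"
begin

lemma pow_mult_weyl_rel: "y ^ b * x = x * y ^ b + of_nat b * y ^ (b - 1)"
proof (induction b)
  case (Suc b)
  have "y ^ Suc b * x = (y * x) * y ^ b + of_nat b * (y * y ^ (b - 1))"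
    by (simp add: mult.assoc Suc algebra_simps mult_of_nat_commute)
  also have "\<dots> = x * y ^ Suc b + of_nat (Suc b) * y ^ b"
    by (cases b) (simp_all add: weyl_rel algebra_simps)
  finally show ?case by simp
qed simp

lemma pow_mult_step_weyl_rel:
  "x ^ c * (y ^ b * x) = x ^ Suc c * y ^ b + of_nat b * (x ^ c * y ^ (b - 1))"
  by (simp add: pow_mult_weyl_rel distrib_left mult.assoc of_nat_mult_middle power_Suc2 del: power_Suc)

lemma normal_order_weyl_rel:
  "y ^ b * x ^ c = (\<Sum>l\<le>b. of_nat (normal_coeff b c l) * (x ^ (c - l) * y ^ (b - l)))"
proof (induction c)
  case 0
  have "(\<Sum>l\<le>b. of_nat (normal_coeff b 0 l) * (x ^ (0 - l) * y ^ (b - l))) =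
      (\<Sum>l\<le>b. if l = 0 then y ^ b else 0)"
    by (rule sum.cong) (auto simp: normal_coeff_eq_0)
  then show ?case by simp
next
  case (Suc c)
  define k where "k l = (of_nat (normal_coeff b c l) :: 'r)" for l
  define T where "T l = x ^ (Suc c - l) * y ^ (b - l)" for l
  have step: "k l * (x ^ (c - l) * (y ^ (b - l) * x)) = k l * T l + k l * of_nat (b - l) * T (Suc l)"
    for l
    by (cases "l \<le> c")
      (simp_all add: pow_mult_step_weyl_rel T_def Suc_diff_le distrib_left mult.assoc k_def normal_coeff_eq_0)
  have "y ^ b * x ^ Suc c = (y ^ b * x ^ c) * x"
    by (simp add: mult.assoc power_commutes)
  also have "\<dots> = (\<Sum>l\<le>b. k l * (x ^ (c - l) * (y ^ (b - l) * x)))"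
    by (simp add: Suc k_def sum_distrib_right mult.assoc)
  also have "\<dots> = (\<Sum>l\<le>b. k l * T l) + (\<Sum>l\<le>b. k l * of_nat (b - l) * T (Suc l))"
    by (simp add: step sum.distrib)
  also have "(\<Sum>l\<le>b. k l * T l) = (\<Sum>l\<le>Suc b. k l * T l)"
    by (simp add: k_def normal_coeff_eq_0)
  also have "\<dots> = T 0 + (\<Sum>l\<le>b. k (Suc l) * T (Suc l))"
    by (subst sum.atMost_Suc_shift) (simp add: k_def)
  also have "T 0 + (\<Sum>l\<le>b. k (Suc l) * T (Suc l)) + (\<Sum>l\<le>b. k l * of_nat (b - l) * T (Suc l)) =
      T 0 + (\<Sum>l\<le>b. (k (Suc l) + k l * of_nat (b - l)) * T (Suc l))"
    by (simp only: add.assoc distrib_right sum.distrib)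
  also have "\<dots> = T 0 + (\<Sum>l\<le>b. of_nat (normal_coeff b (Suc c) (Suc l)) * T (Suc l))"
    by (simp add: k_def normal_coeff_Suc)
  also have "\<dots> = (\<Sum>l\<le>Suc b. of_nat (normal_coeff b (Suc c) l) * T l)"
    by (subst sum.atMost_Suc_shift) simp
  also have "\<dots> = (\<Sum>l\<le>b. of_nat (normal_coeff b (Suc c) l) * T l)"
    by (simp add: normal_coeff_eq_0)
  finally show ?case by (simp only: T_def)
qed

lemma monomial_mult_weyl_rel:
  "(x ^ a * y ^ b) * (x ^ c * y ^ d) =
    (\<Sum>l\<le>b. of_nat (normal_coeff b c l) * (x ^ (a + c - l) * y ^ (b + d - l)))"
proof -
  have summand: "x ^ a * (of_nat (normal_coeff b c l) * (x ^ (c - l) * y ^ (b - l))) * y ^ d =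
      of_nat (normal_coeff b c l) * (x ^ (a + c - l) * y ^ (b + d - l))" if "l \<le> b" for l
  proof (cases "l \<le> c")
    case True
    have "x ^ a * (of_nat (normal_coeff b c l) * (x ^ (c - l) * y ^ (b - l))) * y ^ d =
        of_nat (normal_coeff b c l) * ((x ^ a * x ^ (c - l)) * (y ^ (b - l) * y ^ d))"
      by (simp only: of_nat_mult_middle mult.assoc)
    also have "\<dots> = of_nat (normal_coeff b c l) * (x ^ (a + c - l) * y ^ (b + d - l))"
      by (simp only: power_add[symmetric] add_diff_assoc[OF True] diff_add_assoc2[OF that])
    finally show ?thesis .
  qed (simp add: normal_coeff_eq_0)
  have "(x ^ a * y ^ b) * (x ^ c * y ^ d) = x ^ a * (y ^ b * x ^ c) * y ^ d"
    by (simp only: mult.assoc)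
  also have "\<dots> = (\<Sum>l\<le>b. x ^ a * (of_nat (normal_coeff b c l) * (x ^ (c - l) * y ^ (b - l))) * y ^ d)"
    by (simp only: normal_order_weyl_rel sum_distrib_left sum_distrib_right)
  also have "\<dots> = (\<Sum>l\<le>b. of_nat (normal_coeff b c l) * (x ^ (a + c - l) * y ^ (b + d - l)))"
    by (rule sum.cong) (simp_all add: summand)
  finally show ?thesis .
qed

lemma mult_pow_weyl_rel: "y * x ^ a = x ^ a * y + of_nat a * x ^ (a - 1)"
  using normal_order_weyl_rel[of 1 a] by (simp add: normal_coeff_def)

lemma monomial_commutator_x:
  "(x ^ a * y ^ b) * x - x * (x ^ a * y ^ b) = of_nat b * (x ^ a * y ^ (b - 1))"
proof -
  have "(x ^ a * y ^ b) * x - x * (x ^ a * y ^ b) = x ^ a * (y ^ b * x) - x ^ a * x * y ^ b"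
    by (simp add: mult.assoc power_commutes)
  then show ?thesis
    by (simp add: pow_mult_weyl_rel distrib_left mult.assoc of_nat_mult_middle)
qed

lemma monomial_commutator_y:
  "y * (x ^ a * y ^ b) - (x ^ a * y ^ b) * y = of_nat a * (x ^ (a - 1) * y ^ b)"
proof -
  have "y * (x ^ a * y ^ b) - (x ^ a * y ^ b) * y = (y * x ^ a) * y ^ b - x ^ a * y * y ^ b"
    by (simp add: mult.assoc power_commutes)
  then show ?thesis
    by (simp add: mult_pow_weyl_rel distrib_right mult.assoc)
qed

end

section \<open>Coefficient functions and their evaluation\<close>

lemma in_weyl_supp_iff [simp]: "(i, j) \<in> weyl_supp f \<longleftrightarrow> f i j \<noteq> 0"
  by (simp add: weyl_supp_def)

lemma weyl_carrier_iff: "f \<in> weyl_carrier \<longleftrightarrow> finite (weyl_supp f)"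
  by (simp add: weyl_carrier_def)

lemma sum_weyl_mult_terms:
  fixes A B :: "(nat \<times> nat) set"
  assumes "finite A" "finite B"
  shows "(\<Sum>(a, b)\<in>A. \<Sum>(c, d)\<in>B. \<Sum>l\<le>b. h a b c d l) =
    (\<Sum>(((a, b), (c, d)), l)\<in>Sigma (A \<times> B) (\<lambda>((a, b), _). {..b}). h a b c d l)"
proof -
  let ?g = "\<lambda>x l. h (fst (fst x)) (snd (fst x)) (fst (snd x)) (snd (snd x)) l"
  have "(\<Sum>(a, b)\<in>A. \<Sum>(c, d)\<in>B. \<Sum>l\<le>b. h a b c d l) = (\<Sum>x\<in>A \<times> B. sum (?g x) {..snd (fst x)})"
    by (simp add: split_def sum.cartesian_product[where A = A and B = B])
  also have "\<dots> = sum (case_prod ?g) (Sigma (A \<times> B) (\<lambda>x. {..snd (fst x)}))"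
    using assms by (intro sum.Sigma) auto
  finally show ?thesis
    by (simp add: split_def)
qed

definition weyl_mult_terms :: "'a::zero weyl \<Rightarrow> 'a weyl \<Rightarrow> (((nat \<times> nat) \<times> nat \<times> nat) \<times> nat) set" where
  "weyl_mult_terms f g = Sigma (weyl_supp f \<times> weyl_supp g) (\<lambda>((a, b), _). {..b})"

text \<open>The side condition \<open>l \<le> c\<close> of \<open>weyl_mult\<close> is dropped: \<open>normal_coeff b c l = 0\<close> for \<open>l > c\<close>.\<close>
lemma weyl_mult_eq_sum:
  assumes "f \<in> weyl_carrier" "g \<in> weyl_carrier"
  shows "weyl_mult f g i j = (\<Sum>(((a, b), (c, d)), l)\<in>weyl_mult_terms f g.
    if (a + c - l, b + d - l) = (i, j) then of_nat (normal_coeff b c l) * f a b * g c d else 0)"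
proof -
  have "weyl_mult f g i j = (\<Sum>(a, b)\<in>weyl_supp f. \<Sum>(c, d)\<in>weyl_supp g. \<Sum>l\<le>b.
      if (a + c - l, b + d - l) = (i, j) then of_nat (normal_coeff b c l) * f a b * g c d else 0)"
    unfolding weyl_mult_def normal_coeff_def split_def
    by (intro sum.cong refl) (auto simp: binomial_eq_0)
  then show ?thesis
    using assms by (simp add: weyl_carrier_iff sum_weyl_mult_terms weyl_mult_terms_def)
qed

lemma weyl_supp_weyl_mult_subset:
  assumes "f \<in> weyl_carrier" "g \<in> weyl_carrier"
  shows "weyl_supp (weyl_mult f g) \<subseteq>
    (\<lambda>(((a, b), (c, d)), l). (a + c - l, b + d - l)) ` weyl_mult_terms f g"
proof
  fix z assume "z \<in> weyl_supp (weyl_mult f g)"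
  then obtain i j where z: "z = (i, j)" and "weyl_mult f g i j \<noteq> 0"
    by (auto simp: weyl_supp_def)
  then obtain k where "k \<in> weyl_mult_terms f g" and "(\<lambda>(((a, b), (c, d)), l). (a + c - l, b + d - l)) k = (i, j)"
    unfolding weyl_mult_eq_sum[OF assms]
    by (auto elim!: sum.not_neutral_contains_not_neutral split: if_splits)
  then show "z \<in> (\<lambda>(((a, b), (c, d)), l). (a + c - l, b + d - l)) ` weyl_mult_terms f g"
    using z by force
qed

lemma finite_weyl_mult_terms:
  "f \<in> weyl_carrier \<Longrightarrow> g \<in> weyl_carrier \<Longrightarrow> finite (weyl_mult_terms f g)"
  by (auto simp: weyl_mult_terms_def weyl_carrier_iff split_def intro!: finite_SigmaI)

lemma weyl_mult_carrier:
  assumes "f \<in> weyl_carrier" "g \<in> weyl_carrier"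
  shows "weyl_mult f g \<in> weyl_carrier"
  using finite_subset[OF weyl_supp_weyl_mult_subset[OF assms]
      finite_imageI[OF finite_weyl_mult_terms[OF assms]]]
  by (simp add: weyl_carrier_iff)

lemma weyl_add_carrier: "f \<in> weyl_carrier \<Longrightarrow> g \<in> weyl_carrier \<Longrightarrow> weyl_add f g \<in> weyl_carrier"
  unfolding weyl_carrier_iff
  by (rule finite_subset[of _ "weyl_supp f \<union> weyl_supp g"]) (auto simp: weyl_supp_def weyl_add_def)

lemma weyl_sub_carrier: "f \<in> weyl_carrier \<Longrightarrow> g \<in> weyl_carrier \<Longrightarrow> weyl_sub f g \<in> weyl_carrier"
  unfolding weyl_carrier_iff
  by (rule finite_subset[of _ "weyl_supp f \<union> weyl_supp g"]) (auto simp: weyl_supp_def weyl_sub_def)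

lemma weyl_smult_carrier: "f \<in> weyl_carrier \<Longrightarrow> weyl_smult c f \<in> weyl_carrier"
  unfolding weyl_carrier_iff
  by (rule finite_subset[of _ "weyl_supp f"]) (auto simp: weyl_supp_def weyl_smult_def)

lemma weyl_supp_zero [simp]: "weyl_supp weyl_zero = {}"
  and weyl_supp_one [simp]: "weyl_supp weyl_one = {(0, 0)}"
  and weyl_supp_X [simp]: "weyl_supp weyl_X = {(1, 0)}"
  and weyl_supp_Y [simp]: "weyl_supp weyl_Y = {(0, 1)}"
  by (auto simp: weyl_supp_def weyl_zero_def weyl_one_def weyl_X_def weyl_Y_def split: if_splits)

lemma weyl_zero_carrier: "weyl_zero \<in> weyl_carrier"
  and weyl_one_carrier: "weyl_one \<in> weyl_carrier"
  and weyl_X_carrier: "weyl_X \<in> weyl_carrier"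
  and weyl_Y_carrier: "weyl_Y \<in> weyl_carrier"
  by (simp_all add: weyl_carrier_iff)

definition weyl_eval :: "('a::field \<Rightarrow> 'r::ring_1) \<Rightarrow> 'r \<Rightarrow> 'r \<Rightarrow> 'a weyl \<Rightarrow> 'r" where
  "weyl_eval s x y f = (\<Sum>(i, j)\<in>weyl_supp f. s (f i j) * (x ^ i * y ^ j))"

locale weyl_rep =
  fixes scalar :: "'a::field \<Rightarrow> 'r::ring_1" and x y :: 'r
  assumes scalar_add: "scalar (a + b) = scalar a + scalar b"
    and scalar_mult: "scalar (a * b) = scalar a * scalar b"
    and scalar_one: "scalar 1 = 1"
    and scalar_commute: "scalar a * r = r * scalar a"
    and weyl_rel: "y * x = x * y + 1"
begin

abbreviation eval :: "'a weyl \<Rightarrow> 'r" where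
  "eval \<equiv> weyl_eval scalar x y"

lemma scalar_zero: "scalar 0 = 0"
  using scalar_add[of 0 0] by simp

lemma scalar_sum: "scalar (sum g S) = (\<Sum>s\<in>S. scalar (g s))"
  by (induction S rule: infinite_finite_induct) (simp_all add: scalar_zero scalar_add)

lemma scalar_of_nat: "scalar (of_nat n) = of_nat n"
  by (induction n) (simp_all add: scalar_zero scalar_one scalar_add)

lemma scalar_diff: "scalar (a - b) = scalar a - scalar b"
  using scalar_add[of "a - b" b] by simp

lemma scalar_if_zero: "scalar (if P then a else 0) * r = (if P then scalar a * r else 0)"
  by (simp add: scalar_zero)

lemma scalar_mult_middle: "r * (scalar a * r') = scalar a * (r * r')"
  by (metis mult.assoc scalar_commute)

lemma scalar_mult_swap: "(scalar a * r) * (scalar b * r') = scalar (a * b) * (r * r')"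
  by (simp add: scalar_mult mult.assoc flip: mult.assoc[of r] scalar_commute[of b r])

lemma eval_superset:
  assumes "finite S" "weyl_supp f \<subseteq> S"
  shows "eval f = (\<Sum>(i, j)\<in>S. scalar (f i j) * (x ^ i * y ^ j))"
  unfolding weyl_eval_def using assms
  by (intro sum.mono_neutral_left) (auto simp: scalar_zero)

lemma eval_sum_terms:
  assumes K: "finite K" and f: "\<And>i j. f i j = (\<Sum>k\<in>K. if pos k = (i, j) then w k else 0)"
  shows "eval f = (\<Sum>k\<in>K. scalar (w k) * (x ^ fst (pos k) * y ^ snd (pos k)))"
proof -
  let ?m = "\<lambda>z. x ^ fst z * y ^ snd z"
  have supp: "weyl_supp f \<subseteq> pos ` K"
  proof
    fix z assume "z \<in> weyl_supp f"
    then have "(\<Sum>k\<in>K. if pos k = z then w k else 0) \<noteq> 0"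
      by (cases z) (simp add: f)
    then show "z \<in> pos ` K"
      by (auto elim!: sum.not_neutral_contains_not_neutral split: if_splits)
  qed
  have "eval f = (\<Sum>z\<in>pos ` K. scalar (f (fst z) (snd z)) * ?m z)"
    using eval_superset[OF finite_imageI[OF K] supp] by (simp add: split_def)
  also have "\<dots> = (\<Sum>z\<in>pos ` K. \<Sum>k\<in>K. if pos k = z then scalar (w k) * ?m z else 0)"
    by (simp add: f scalar_sum sum_distrib_right scalar_if_zero)
  also have "\<dots> = (\<Sum>k\<in>K. scalar (w k) * ?m (pos k))"
    by (subst sum.swap) (simp add: K)
  finally show ?thesis .
qed

lemma eval_mult:
  assumes "f \<in> weyl_carrier" "g \<in> weyl_carrier"
  shows "eval (weyl_mult f g) = eval f * eval g"
proof -
  let ?pos = "\<lambda>(((a, b), (c, d)), l). (a + c - l, b + d - l)"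
  let ?w = "\<lambda>(((a, b), (c, d)), l). of_nat (normal_coeff b c l) * f a b * g c d"
  have fin: "finite (weyl_supp f)" "finite (weyl_supp g)"
    using assms by (simp_all add: weyl_carrier_iff)
  have "eval f * eval g = (\<Sum>(a, b)\<in>weyl_supp f. \<Sum>(c, d)\<in>weyl_supp g.
      scalar (f a b * g c d) * ((x ^ a * y ^ b) * (x ^ c * y ^ d)))"
    unfolding weyl_eval_def sum_product by (auto simp: scalar_mult_swap intro!: sum.cong)
  also have "\<dots> = (\<Sum>(a, b)\<in>weyl_supp f. \<Sum>(c, d)\<in>weyl_supp g. \<Sum>l\<le>b.
      scalar (of_nat (normal_coeff b c l) * f a b * g c d) * (x ^ (a + c - l) * y ^ (b + d - l)))"
    unfolding monomial_mult_weyl_rel[OF weyl_rel] sum_distrib_left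
    by (auto simp: scalar_mult scalar_of_nat mult.assoc of_nat_mult_middle intro!: sum.cong)
  also have "\<dots> = (\<Sum>k\<in>weyl_mult_terms f g. scalar (?w k) * (x ^ fst (?pos k) * y ^ snd (?pos k)))"
    by (subst sum_weyl_mult_terms[OF fin]) (simp add: weyl_mult_terms_def split_def)
  also have "\<dots> = eval (weyl_mult f g)"
    by (rule eval_sum_terms[OF finite_weyl_mult_terms[OF assms], symmetric])
      (simp add: weyl_mult_eq_sum[OF assms] split_def cong: if_cong)
  finally show ?thesis ..
qed

lemma eval_add:
  assumes "f \<in> weyl_carrier" "g \<in> weyl_carrier"
  shows "eval (weyl_add f g) = eval f + eval g"
proof -
  let ?S = "weyl_supp f \<union> weyl_supp g"
  have fin: "finite ?S" using assms by (simp add: weyl_carrier_iff)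
  have sub: "weyl_supp (weyl_add f g) \<subseteq> ?S"
    by (auto simp: weyl_supp_def weyl_add_def)
  show ?thesis
    unfolding eval_superset[OF fin sub] eval_superset[OF fin Un_upper1] eval_superset[OF fin Un_upper2]
    by (simp add: weyl_add_def scalar_add distrib_right sum.distrib split_def)
qed

lemma eval_sub:
  assumes "f \<in> weyl_carrier" "g \<in> weyl_carrier"
  shows "eval (weyl_sub f g) = eval f - eval g"
proof -
  let ?S = "weyl_supp f \<union> weyl_supp g"
  have fin: "finite ?S" using assms by (simp add: weyl_carrier_iff)
  have sub: "weyl_supp (weyl_sub f g) \<subseteq> ?S"
    by (auto simp: weyl_supp_def weyl_sub_def)
  show ?thesis
    unfolding eval_superset[OF fin sub] eval_superset[OF fin Un_upper1] eval_superset[OF fin Un_upper2]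
    by (simp add: weyl_sub_def scalar_diff left_diff_distrib sum_subtractf split_def)
qed

lemma eval_smult:
  assumes "f \<in> weyl_carrier"
  shows "eval (weyl_smult c f) = scalar c * eval f"
proof -
  have fin: "finite (weyl_supp f)" using assms by (simp add: weyl_carrier_iff)
  have sub: "weyl_supp (weyl_smult c f) \<subseteq> weyl_supp f"
    by (auto simp: weyl_supp_def weyl_smult_def)
  show ?thesis
    unfolding eval_superset[OF fin sub] eval_superset[OF fin order_refl]
    by (simp add: weyl_smult_def scalar_mult sum_distrib_left mult.assoc split_def)
qed

lemma eval_zero: "eval weyl_zero = 0"
  and eval_one: "eval weyl_one = 1"
  and eval_X: "eval weyl_X = x"
  and eval_Y: "eval weyl_Y = y"
  unfolding weyl_eval_def weyl_supp_zero weyl_supp_one weyl_supp_X weyl_supp_Y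
  by (simp_all add: weyl_one_def weyl_X_def weyl_Y_def scalar_one)

end

section \<open>The action on polynomials\<close>

typedef (overloaded) 'a linop =
  "{F :: 'a::field poly \<Rightarrow> 'a poly. (\<forall>p q. F (p + q) = F p + F q) \<and> (\<forall>c p. F (smult c p) = smult c (F p))}"
  morphisms lapply Linop
  by (rule exI[of _ "\<lambda>p. p"]) auto

setup_lifting type_definition_linop

instantiation linop :: (field) ring_1
begin

lift_definition zero_linop :: "'a linop" is "\<lambda>p. 0" by simp
lift_definition one_linop :: "'a linop" is "\<lambda>p. p" by simp
lift_definition plus_linop :: "'a linop \<Rightarrow> 'a linop \<Rightarrow> 'a linop" is "\<lambda>F G p. F p + G p"
  by (simp add: algebra_simps smult_add_right)
lift_definition minus_linop :: "'a linop \<Rightarrow> 'a linop \<Rightarrow> 'a linop" is "\<lambda>F G p. F p - G p"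
  by (simp add: algebra_simps smult_diff_right)
lift_definition uminus_linop :: "'a linop \<Rightarrow> 'a linop" is "\<lambda>F p. - F p"
  by (simp add: algebra_simps)
lift_definition times_linop :: "'a linop \<Rightarrow> 'a linop \<Rightarrow> 'a linop" is "\<lambda>F G p. F (G p)"
  by simp

instance
proof
  fix a b c :: "'a linop"
  show "a + b + c = a + (b + c)" by transfer (simp add: add.assoc)
  show "a + b = b + a" by transfer (simp add: add.commute)
  show "0 + a = a" by transfer simp
  show "- a + a = 0" by transfer simp
  show "a - b = a + - b" by transfer simp
  show "a * b * c = a * (b * c)" by transfer simp
  show "1 * a = a" by transfer simp
  show "a * 1 = a" by transfer simp
  show "(a + b) * c = a * c + b * c" by transfer simp
  show "a * (b + c) = a * b + a * c" by transfer simp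
  show "(0::'a linop) \<noteq> 1"
  proof
    assume "(0::'a linop) = 1"
    then have "lapply (0::'a linop) 1 = lapply 1 1" by simp
    then show False by transfer simp
  qed
qed

end

lemma lapply_add [simp]: "lapply (F + G) p = lapply F p + lapply G p"
  by transfer simp

lemma lapply_mult [simp]: "lapply (F * G) p = lapply F (lapply G p)"
  by transfer simp

lemma lapply_one [simp]: "lapply 1 p = p"
  by transfer simp

lemma lapply_zero [simp]: "lapply 0 p = 0"
  by transfer simp

lemma lapply_smult: "lapply F (smult c p) = smult c (lapply F p)"
  by transfer simp

lemma lapply_padd: "lapply F (p + q) = lapply F p + lapply F q"
  by transfer simp

lemma lapply_pzero [simp]: "lapply F 0 = 0"
  using lapply_smult[of F 0 0] by simp

lemma lapply_sum: "lapply (sum G S) p = (\<Sum>s\<in>S. lapply (G s) p)"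
  by (induction S rule: infinite_finite_induct) (simp_all add: zero_linop.rep_eq)

lemma lapply_psum: "lapply F (sum g S) = (\<Sum>s\<in>S. lapply F (g s))"
  by (induction S rule: infinite_finite_induct) (simp_all add: lapply_padd)

lemma lapply_power: "lapply (F ^ n) p = (lapply F ^^ n) p"
  by (induction n arbitrary: p) (simp_all add: funpow_Suc_right)

lemma linop_eqI: "(\<And>p. lapply F p = lapply G p) \<Longrightarrow> F = G"
  by transfer auto

lift_definition linop_const :: "'a::field \<Rightarrow> 'a linop" is smult
  by (simp add: smult_add_right mult.commute)

lift_definition linop_T :: "'a::field linop" is "\<lambda>p. [:0, 1:] * p"
  by (simp add: algebra_simps)

lift_definition linop_D :: "'a::field linop" is pderiv
  by (simp add: pderiv_add pderiv_smult)

interpretation linop_rep: weyl_rep linop_const linop_T linop_D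
proof
  fix a b :: 'a and r :: "'a linop"
  show "linop_const (a + b) = linop_const a + linop_const b"
    by (rule linop_eqI) (simp add: linop_const.rep_eq smult_add_left)
  show "linop_const (a * b) = linop_const a * linop_const b"
    by (rule linop_eqI) (simp add: linop_const.rep_eq)
  show "linop_const 1 = 1"
    by (rule linop_eqI) (simp add: linop_const.rep_eq)
  show "linop_const a * r = r * linop_const a"
    by (rule linop_eqI) (simp add: linop_const.rep_eq lapply_smult)
  show "linop_D * linop_T = linop_T * linop_D + (1 :: 'a linop)"
    by (rule linop_eqI) (simp add: linop_T.rep_eq linop_D.rep_eq pderiv_mult pderiv_pCons)
qed

lemma lapply_linop_const [simp]: "lapply (linop_const c) p = smult c p"
  by transfer simp

lemma lapply_linop_const_mult: "lapply (linop_const c * F) p = smult c (lapply F p)"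
  by simp

lemma lapply_linop_monomial:
  "lapply (linop_T ^ i * linop_D ^ j) q = monom 1 i * (pderiv ^^ j) q"
proof -
  have "(lapply linop_T ^^ i) p = monom 1 i * p" for p :: "'a poly"
    by (induction i arbitrary: p)
      (simp_all add: linop_T.rep_eq monom_Suc funpow_Suc_right mult.assoc flip: one_pCons)
  moreover have "lapply (linop_D :: 'a linop) = pderiv"
    by (rule ext) (simp add: linop_D.rep_eq)
  ultimately show ?thesis
    by (simp add: lapply_power)
qed

lemma pderiv_funpow_monom:
  "(pderiv ^^ j) (monom (1::'a::field) n) = monom (\<Prod>k<j. of_nat (n - k)) (n - j)"
  by (induction j) (simp_all add: pderiv_monom mult.commute)

lemma coeff_linop_rep_eval:
  "coeff (lapply (linop_rep.eval f) (monom 1 n)) m =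
    (\<Sum>(i, j)\<in>weyl_supp f. f i j * (if m = i + (n - j) then \<Prod>k<j. of_nat (n - k) else 0))"
  unfolding weyl_eval_def lapply_sum
  by (simp add: coeff_sum lapply_linop_monomial pderiv_funpow_monom mult_monom coeff_monom split_def
      eq_commute[of m] lapply_linop_const_mult del: lapply_mult)

lemma linop_rep_eval_eq_0:
  fixes f :: "'a::field_char_0 weyl"
  assumes f: "f \<in> weyl_carrier" and z: "linop_rep.eval f = 0"
  shows "f = weyl_zero"
proof (rule ccontr)
  assume "f \<noteq> weyl_zero"
  then have ne: "weyl_supp f \<noteq> {}" by (auto simp: weyl_supp_def weyl_zero_def fun_eq_iff)
  have fin: "finite (weyl_supp f)" using f by (simp add: weyl_carrier_iff)
  define j0 where "j0 = Min (snd ` weyl_supp f)"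
  have "j0 \<in> snd ` weyl_supp f" unfolding j0_def using fin ne by (intro Min_in) auto
  then obtain i0 where i0: "(i0, j0) \<in> weyl_supp f" by auto
  have jmin: "j0 \<le> j" if "(i, j) \<in> weyl_supp f" for i j
    using fin that unfolding j0_def by (metis Min_le finite_imageI image_eqI snd_conv)
  define ff where "ff j = (\<Prod>k<j. of_nat (j0 - k) :: 'a)" for j
  have ffz: "ff j = 0" if "j > j0" for j
    unfolding ff_def using that by (intro prod_zero) (auto intro: bexI[of _ j0])
  have ffnz: "ff j0 \<noteq> 0" unfolding ff_def by (simp add: prod_zero_iff)
  \<comment> \<open>on \<open>t ^ j0\<close>, monomials with \<open>j > j0\<close> vanish and those with \<open>j = j0\<close> have distinct degrees\<close>
  have "0 = coeff (lapply (linop_rep.eval f) (monom 1 j0)) i0" using z by simp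
  also have "\<dots> = (\<Sum>z\<in>weyl_supp f. if z = (i0, j0) then f i0 j0 * ff j0 else 0)"
    unfolding coeff_linop_rep_eval ff_def[symmetric]
  proof (intro sum.cong refl, clarify)
    fix i j assume "(i, j) \<in> weyl_supp f"
    then show "f i j * (if i0 = i + (j0 - j) then ff j else 0) = (if (i, j) = (i0, j0) then f i0 j0 * ff j0 else 0)"
      using jmin[of i j] ffz[of j] by (cases "j = j0") auto
  qed
  also have "\<dots> = f i0 j0 * ff j0" using i0 fin by (simp add: sum.delta')
  finally show False using i0 ffnz by simp
qed

lemma linop_rep_eval_inj:
  fixes f g :: "'a::field_char_0 weyl"
  assumes "f \<in> weyl_carrier" "g \<in> weyl_carrier" "linop_rep.eval f = linop_rep.eval g"
  shows "f = g"
proof -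
  have "weyl_sub f g = weyl_zero"
    using assms by (intro linop_rep_eval_eq_0) (simp_all add: weyl_sub_carrier linop_rep.eval_sub)
  then show ?thesis by (auto simp: fun_eq_iff weyl_sub_def weyl_zero_def)
qed

section \<open>The Weyl algebra as a ring\<close>

text \<open>The ring axioms for the coefficient functions are inherited from the faithful action on \<open>K[t]\<close>.\<close>

typedef (overloaded) 'a weyl_alg = "weyl_carrier :: 'a::field_char_0 weyl set"
  using weyl_zero_carrier by blast

setup_lifting type_definition_weyl_alg

definition weyl_action :: "'a::field_char_0 weyl_alg \<Rightarrow> 'a linop" where
  "weyl_action a = linop_rep.eval (Rep_weyl_alg a)"

lemma weyl_action_inj: "weyl_action a = weyl_action b \<Longrightarrow> a = b"
  unfolding weyl_action_def
  by (metis linop_rep_eval_inj Rep_weyl_alg Rep_weyl_alg_inject)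

instantiation weyl_alg :: (field_char_0) ring_1
begin

lift_definition zero_weyl_alg :: "'a weyl_alg" is weyl_zero by (rule weyl_zero_carrier)
lift_definition one_weyl_alg :: "'a weyl_alg" is weyl_one by (rule weyl_one_carrier)
lift_definition plus_weyl_alg :: "'a weyl_alg \<Rightarrow> 'a weyl_alg \<Rightarrow> 'a weyl_alg" is weyl_add
  by (rule weyl_add_carrier)
lift_definition minus_weyl_alg :: "'a weyl_alg \<Rightarrow> 'a weyl_alg \<Rightarrow> 'a weyl_alg" is weyl_sub
  by (rule weyl_sub_carrier)
lift_definition uminus_weyl_alg :: "'a weyl_alg \<Rightarrow> 'a weyl_alg" is "weyl_smult (- 1)"
  by (rule weyl_smult_carrier)
lift_definition times_weyl_alg :: "'a weyl_alg \<Rightarrow> 'a weyl_alg \<Rightarrow> 'a weyl_alg" is weyl_mult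
  by (rule weyl_mult_carrier)

lemma weyl_action_zero: "weyl_action 0 = 0"
  and weyl_action_one: "weyl_action 1 = 1"
  and weyl_action_add: "weyl_action (a + b) = weyl_action a + weyl_action b"
  and weyl_action_diff: "weyl_action (a - b) = weyl_action a - weyl_action b"
  and weyl_action_mult: "weyl_action (a * b) = weyl_action a * weyl_action b"
  and weyl_action_uminus: "weyl_action (- a) = - weyl_action a"
  using Rep_weyl_alg[of a] Rep_weyl_alg[of b]
  by (simp_all add: weyl_action_def zero_weyl_alg.rep_eq one_weyl_alg.rep_eq plus_weyl_alg.rep_eq
      minus_weyl_alg.rep_eq times_weyl_alg.rep_eq uminus_weyl_alg.rep_eq linop_rep.eval_zero
      linop_rep.eval_one linop_rep.eval_add linop_rep.eval_sub linop_rep.eval_mult linop_rep.eval_smult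
      linop_rep.scalar_diff[of 0 1, simplified] linop_rep.scalar_zero linop_rep.scalar_one)

instance
proof
  fix a b c :: "'a weyl_alg"
  show "a + b + c = a + (b + c)" by (rule weyl_action_inj) (simp add: weyl_action_add add.assoc)
  show "a + b = b + a" by (rule weyl_action_inj) (simp add: weyl_action_add add.commute)
  show "0 + a = a" by (rule weyl_action_inj) (simp add: weyl_action_add weyl_action_zero)
  show "- a + a = 0" by (rule weyl_action_inj) (simp add: weyl_action_add weyl_action_zero weyl_action_uminus)
  show "a - b = a + - b" by (rule weyl_action_inj) (simp add: weyl_action_add weyl_action_diff weyl_action_uminus)
  show "a * b * c = a * (b * c)" by (rule weyl_action_inj) (simp add: weyl_action_mult mult.assoc)
  show "1 * a = a" by (rule weyl_action_inj) (simp add: weyl_action_mult weyl_action_one)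
  show "a * 1 = a" by (rule weyl_action_inj) (simp add: weyl_action_mult weyl_action_one)
  show "(a + b) * c = a * c + b * c" by (rule weyl_action_inj) (simp add: weyl_action_mult weyl_action_add distrib_right)
  show "a * (b + c) = a * b + a * c" by (rule weyl_action_inj) (simp add: weyl_action_mult weyl_action_add distrib_left)
  show "(0::'a weyl_alg) \<noteq> 1"
    using weyl_action_zero weyl_action_one by force
qed

end

lift_definition wconst :: "'a::field_char_0 \<Rightarrow> 'a weyl_alg" is "\<lambda>c. weyl_smult c weyl_one"
  by (rule weyl_smult_carrier[OF weyl_one_carrier])

lift_definition wX :: "'a::field_char_0 weyl_alg" is weyl_X
  by (rule weyl_X_carrier)

lift_definition wY :: "'a::field_char_0 weyl_alg" is weyl_Y
  by (rule weyl_Y_carrier)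

lemma weyl_action_wconst: "weyl_action (wconst c) = linop_const c"
  and weyl_action_wX: "weyl_action wX = linop_T"
  and weyl_action_wY: "weyl_action wY = linop_D"
  by (simp_all add: weyl_action_def wconst.rep_eq wX.rep_eq wY.rep_eq linop_rep.eval_smult
      weyl_one_carrier linop_rep.eval_one linop_rep.eval_X linop_rep.eval_Y)

lemma weyl_action_power: "weyl_action (a ^ n) = weyl_action a ^ n"
  by (induction n) (simp_all add: weyl_action_one weyl_action_mult)

lemma weyl_action_sum: "weyl_action (sum g S) = (\<Sum>s\<in>S. weyl_action (g s))"
  by (induction S rule: infinite_finite_induct) (simp_all add: weyl_action_zero weyl_action_add)

lemma wY_wX_rel: "wY * wX = wX * wY + (1::'a::field_char_0 weyl_alg)"
  by (rule weyl_action_inj)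
    (simp add: weyl_action_mult weyl_action_add weyl_action_one weyl_action_wX weyl_action_wY
      linop_rep.weyl_rel)

lemma weyl_rep_weyl_alg:
  fixes x y :: "'a::field_char_0 weyl_alg"
  assumes "y * x = x * y + 1"
  shows "weyl_rep wconst x y"
proof
  fix a b :: 'a and r :: "'a weyl_alg"
  show "wconst (a + b) = wconst a + wconst b"
    by (rule weyl_action_inj) (simp add: weyl_action_add weyl_action_wconst linop_rep.scalar_add)
  show "wconst (a * b) = wconst a * wconst b"
    by (rule weyl_action_inj) (simp add: weyl_action_mult weyl_action_wconst linop_rep.scalar_mult)
  show "wconst 1 = 1"
    by (rule weyl_action_inj) (simp add: weyl_action_one weyl_action_wconst linop_rep.scalar_one)
  show "wconst a * r = r * wconst a"
    by (rule weyl_action_inj) (simp add: weyl_action_mult weyl_action_wconst linop_rep.scalar_commute)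
qed (fact assms)

interpretation weyl_alg_rep: weyl_rep wconst wX wY
  by (rule weyl_rep_weyl_alg[OF wY_wX_rel])

lemma Rep_weyl_alg_wconst_mult: "Rep_weyl_alg (wconst c * a) = weyl_smult c (Rep_weyl_alg a)"
  by (metis Rep_weyl_alg Rep_weyl_alg_inject weyl_smult_carrier linop_rep_eval_inj weyl_action_def
      weyl_action_mult weyl_action_wconst linop_rep.eval_smult)

definition weyl_subst :: "'a::field_char_0 weyl_alg \<Rightarrow> 'a weyl_alg \<Rightarrow> 'a weyl_alg \<Rightarrow> 'a weyl_alg" where
  "weyl_subst x y a = weyl_eval wconst x y (Rep_weyl_alg a)"

context
  fixes x y :: "'a::field_char_0 weyl_alg"
  assumes weyl_rel: "y * x = x * y + 1"
begin

interpretation subst: weyl_rep wconst x y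
  by (rule weyl_rep_weyl_alg[OF weyl_rel])

lemma weyl_subst_add: "weyl_subst x y (a + b) = weyl_subst x y a + weyl_subst x y b"
  and weyl_subst_diff: "weyl_subst x y (a - b) = weyl_subst x y a - weyl_subst x y b"
  and weyl_subst_mult: "weyl_subst x y (a * b) = weyl_subst x y a * weyl_subst x y b"
  using Rep_weyl_alg[of a] Rep_weyl_alg[of b]
  by (simp_all add: weyl_subst_def plus_weyl_alg.rep_eq minus_weyl_alg.rep_eq times_weyl_alg.rep_eq
      subst.eval_add subst.eval_sub subst.eval_mult)

lemma weyl_subst_wconst_mult: "weyl_subst x y (wconst c * a) = wconst c * weyl_subst x y a"
  using Rep_weyl_alg[of a] by (simp add: weyl_subst_def Rep_weyl_alg_wconst_mult subst.eval_smult)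

lemma weyl_subst_one: "weyl_subst x y 1 = 1"
  and weyl_subst_wX: "weyl_subst x y wX = x"
  and weyl_subst_wY: "weyl_subst x y wY = y"
  by (simp_all add: weyl_subst_def one_weyl_alg.rep_eq wX.rep_eq wY.rep_eq
      subst.eval_one subst.eval_X subst.eval_Y)

lemma weyl_subst_wconst: "weyl_subst x y (wconst c) = wconst c"
  using weyl_subst_wconst_mult[of c 1] by (simp add: weyl_subst_one)

lemma weyl_subst_power: "weyl_subst x y (a ^ n) = weyl_subst x y a ^ n"
  by (induction n) (simp_all add: weyl_subst_one weyl_subst_mult)

lemma weyl_subst_sum: "weyl_subst x y (sum g S) = (\<Sum>s\<in>S. weyl_subst x y (g s))"
proof (induction S rule: infinite_finite_induct)
  case (insert s S)
  then show ?case by (simp add: weyl_subst_add)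
qed (simp_all add: weyl_subst_def zero_weyl_alg.rep_eq subst.eval_zero)

lemma weyl_subst_weyl_subst:
  "weyl_subst x y (weyl_subst u v a) = weyl_subst (weyl_subst x y u) (weyl_subst x y v) a"
  unfolding weyl_subst_def[of u v] weyl_subst_def[of "weyl_subst x y u"] weyl_eval_def
  by (simp add: weyl_subst_sum weyl_subst_wconst weyl_subst_mult weyl_subst_power split_def)

end

lemma weyl_action_eval_generators: "weyl_action (weyl_alg_rep.eval f) = linop_rep.eval f"
  unfolding weyl_eval_def
  by (simp add: weyl_action_sum weyl_action_mult weyl_action_power weyl_action_wconst weyl_action_wX
      weyl_action_wY split_def)

lemma weyl_alg_expansion: "weyl_alg_rep.eval (Rep_weyl_alg a) = a"
  using weyl_action_eval_generators[of "Rep_weyl_alg a"]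
  by (intro weyl_action_inj) (simp add: weyl_action_def)

lemma weyl_subst_generators: "weyl_subst wX wY a = a"
  by (simp add: weyl_subst_def weyl_alg_expansion)

section \<open>Centralizers of the generators and simplicity\<close>

lemma Rep_weyl_alg_sum: "Rep_weyl_alg (sum g S) i j = (\<Sum>s\<in>S. Rep_weyl_alg (g s) i j)"
  by (induction S rule: infinite_finite_induct)
    (simp_all add: zero_weyl_alg.rep_eq plus_weyl_alg.rep_eq weyl_zero_def weyl_add_def)

lemma Rep_weyl_alg_monomial: "Rep_weyl_alg (wX ^ a * wY ^ b) = (\<lambda>i j. if i = a \<and> j = b then 1 else 0)"
proof -
  let ?m = "(\<lambda>i j. if i = a \<and> j = b then 1 else 0) :: 'a weyl"
  have supp: "weyl_supp ?m = {(a, b)}"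
    by (auto simp: weyl_supp_def)
  then have "?m \<in> weyl_carrier"
    by (simp add: weyl_carrier_iff)
  moreover have "weyl_action (wX ^ a * wY ^ b) = linop_T ^ a * linop_D ^ b"
    by (simp add: weyl_action_mult weyl_action_power weyl_action_wX weyl_action_wY)
  then have "linop_rep.eval (Rep_weyl_alg (wX ^ a * wY ^ b)) = linop_rep.eval ?m"
    by (simp add: weyl_action_def weyl_eval_def supp linop_rep.scalar_one)
  ultimately show ?thesis
    by (intro linop_rep_eval_inj Rep_weyl_alg)
qed

lemma Rep_weyl_alg_sum_monomials:
  "Rep_weyl_alg (\<Sum>p\<in>S. wconst (c p) * (wX ^ u p * wY ^ v p)) i j =
    (\<Sum>p\<in>S. if (u p, v p) = (i, j) then c p else 0)"
  by (auto simp: Rep_weyl_alg_sum Rep_weyl_alg_wconst_mult Rep_weyl_alg_monomial weyl_smult_def intro!: sum.cong)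

lemma weyl_alg_monomial_expansion:
  "a = (\<Sum>(i, j)\<in>weyl_supp (Rep_weyl_alg a). wconst (Rep_weyl_alg a i j) * (wX ^ i * wY ^ j))"
  using weyl_alg_expansion[of a] by (simp add: weyl_eval_def)

lemma Rep_weyl_alg_commutator_wX:
  "Rep_weyl_alg (z * wX - wX * z) i j = of_nat (Suc j) * Rep_weyl_alg z i (Suc j)"
proof -
  let ?c = "Rep_weyl_alg z" and ?S = "weyl_supp (Rep_weyl_alg z)"
  have fin: "finite ?S"
    using Rep_weyl_alg[of z] by (simp add: weyl_carrier_iff)
  have "z * wX - wX * z =
      (\<Sum>(a, b)\<in>?S. wconst (?c a b) * ((wX ^ a * wY ^ b) * wX - wX * (wX ^ a * wY ^ b)))"
    by (subst (1 2) weyl_alg_monomial_expansion[of z])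
      (simp add: sum_distrib_left sum_distrib_right sum_subtractf right_diff_distrib mult.assoc
        weyl_alg_rep.scalar_mult_middle split_def)
  also have "\<dots> = (\<Sum>(a, b)\<in>?S. wconst (?c a b * of_nat b) * (wX ^ a * wY ^ (b - 1)))"
    unfolding monomial_commutator_x[OF wY_wX_rel]
    by (simp add: weyl_alg_rep.scalar_mult weyl_alg_rep.scalar_of_nat mult.assoc)
  finally have "Rep_weyl_alg (z * wX - wX * z) i j =
      (\<Sum>p\<in>?S. if (fst p, snd p - 1) = (i, j) then ?c (fst p) (snd p) * of_nat (snd p) else 0)"
    by (simp add: Rep_weyl_alg_sum_monomials split_def)
  also have "\<dots> = (\<Sum>p\<in>?S. if p = (i, Suc j) then ?c i (Suc j) * of_nat (Suc j) else 0)"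
    by (intro sum.cong) auto
  also have "\<dots> = of_nat (Suc j) * ?c i (Suc j)"
    using fin by (simp add: sum.delta')
  finally show ?thesis .
qed

lemma Rep_weyl_alg_commutator_wY:
  "Rep_weyl_alg (wY * z - z * wY) i j = of_nat (Suc i) * Rep_weyl_alg z (Suc i) j"
proof -
  let ?c = "Rep_weyl_alg z" and ?S = "weyl_supp (Rep_weyl_alg z)"
  have fin: "finite ?S"
    using Rep_weyl_alg[of z] by (simp add: weyl_carrier_iff)
  have "wY * z - z * wY =
      (\<Sum>(a, b)\<in>?S. wconst (?c a b) * (wY * (wX ^ a * wY ^ b) - (wX ^ a * wY ^ b) * wY))"
    by (subst (1 2) weyl_alg_monomial_expansion[of z])
      (simp add: sum_distrib_left sum_distrib_right sum_subtractf right_diff_distrib mult.assoc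
        weyl_alg_rep.scalar_mult_middle split_def)
  also have "\<dots> = (\<Sum>(a, b)\<in>?S. wconst (?c a b * of_nat a) * (wX ^ (a - 1) * wY ^ b))"
    unfolding monomial_commutator_y[OF wY_wX_rel]
    by (simp add: weyl_alg_rep.scalar_mult weyl_alg_rep.scalar_of_nat mult.assoc)
  finally have "Rep_weyl_alg (wY * z - z * wY) i j =
      (\<Sum>p\<in>?S. if (fst p - 1, snd p) = (i, j) then ?c (fst p) (snd p) * of_nat (fst p) else 0)"
    by (simp add: Rep_weyl_alg_sum_monomials split_def)
  also have "\<dots> = (\<Sum>p\<in>?S. if p = (Suc i, j) then ?c (Suc i) j * of_nat (Suc i) else 0)"
    by (intro sum.cong) auto
  also have "\<dots> = of_nat (Suc i) * ?c (Suc i) j"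
    using fin by (simp add: sum.delta')
  finally show ?thesis .
qed

lemma commute_wX_imp_Rep_eq_0: "z * wX = wX * z \<Longrightarrow> Rep_weyl_alg z i (Suc j) = 0"
  using Rep_weyl_alg_commutator_wX[of z i j] by (simp add: zero_weyl_alg.rep_eq weyl_zero_def del: of_nat_Suc)

lemma commute_wY_imp_Rep_eq_0: "wY * z = z * wY \<Longrightarrow> Rep_weyl_alg z (Suc i) j = 0"
  using Rep_weyl_alg_commutator_wY[of z i j] by (simp add: zero_weyl_alg.rep_eq weyl_zero_def del: of_nat_Suc)

lemma commute_wX_imp_weyl_supp: "z * wX = wX * z \<Longrightarrow> (i, j) \<in> weyl_supp (Rep_weyl_alg z) \<Longrightarrow> j = 0"
  using commute_wX_imp_Rep_eq_0[of z i "j - 1"] by (cases j) auto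

lemma commute_wY_imp_weyl_supp: "wY * z = z * wY \<Longrightarrow> (i, j) \<in> weyl_supp (Rep_weyl_alg z) \<Longrightarrow> i = 0"
  using commute_wY_imp_Rep_eq_0[of z "i - 1" j] by (cases i) auto

lemma weyl_alg_eq_sum_wX_powers:
  assumes "z * wX = wX * z"
  shows "z = (\<Sum>i\<in>fst ` weyl_supp (Rep_weyl_alg z). wconst (Rep_weyl_alg z i 0) * wX ^ i)"
proof -
  let ?I = "fst ` weyl_supp (Rep_weyl_alg z)"
  have "weyl_supp (Rep_weyl_alg z) \<subseteq> (\<lambda>i. (i, 0)) ` ?I"
  proof
    fix p assume p: "p \<in> weyl_supp (Rep_weyl_alg z)"
    moreover obtain i j where "p = (i, j)" by fastforce
    moreover have "j = 0" using commute_wX_imp_weyl_supp[OF assms] p calculation(2) by blast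
    ultimately show "p \<in> (\<lambda>i. (i, 0)) ` ?I" by (metis fst_conv image_eqI)
  qed
  moreover have "finite (weyl_supp (Rep_weyl_alg z))"
    using Rep_weyl_alg[of z] by (simp add: weyl_carrier_iff)
  ultimately have "weyl_alg_rep.eval (Rep_weyl_alg z) =
      (\<Sum>(i, j)\<in>(\<lambda>i. (i, 0)) ` ?I. wconst (Rep_weyl_alg z i j) * (wX ^ i * wY ^ j))"
    by (intro weyl_alg_rep.eval_superset finite_imageI)
  also have "\<dots> = (\<Sum>i\<in>?I. wconst (Rep_weyl_alg z i 0) * wX ^ i)"
    by (subst sum.reindex) (auto intro: inj_onI)
  finally show ?thesis
    by (simp only: weyl_alg_expansion)
qed

lemma weyl_alg_eq_sum_wY_powers:
  assumes "wY * z = z * wY"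
  shows "z = (\<Sum>j\<in>snd ` weyl_supp (Rep_weyl_alg z). wconst (Rep_weyl_alg z 0 j) * wY ^ j)"
proof -
  let ?J = "snd ` weyl_supp (Rep_weyl_alg z)"
  have "weyl_supp (Rep_weyl_alg z) \<subseteq> (\<lambda>j. (0, j)) ` ?J"
  proof
    fix p assume p: "p \<in> weyl_supp (Rep_weyl_alg z)"
    moreover obtain i j where "p = (i, j)" by fastforce
    moreover have "i = 0" using commute_wY_imp_weyl_supp[OF assms] p calculation(2) by blast
    ultimately show "p \<in> (\<lambda>j. (0, j)) ` ?J" by (metis snd_conv image_eqI)
  qed
  moreover have "finite (weyl_supp (Rep_weyl_alg z))"
    using Rep_weyl_alg[of z] by (simp add: weyl_carrier_iff)
  ultimately have "weyl_alg_rep.eval (Rep_weyl_alg z) =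
      (\<Sum>(i, j)\<in>(\<lambda>j. (0, j)) ` ?J. wconst (Rep_weyl_alg z i j) * (wX ^ i * wY ^ j))"
    by (intro weyl_alg_rep.eval_superset finite_imageI)
  also have "\<dots> = (\<Sum>j\<in>?J. wconst (Rep_weyl_alg z 0 j) * wY ^ j)"
    by (subst sum.reindex) (auto intro: inj_onI)
  finally show ?thesis
    by (simp only: weyl_alg_expansion)
qed

lemma weyl_alg_central_eq_wconst:
  assumes "z * wX = wX * z" "wY * z = z * wY"
  shows "z = wconst (Rep_weyl_alg z 0 0)"
proof -
  let ?J = "snd ` weyl_supp (Rep_weyl_alg z)"
  have "?J \<subseteq> {0}"
    using commute_wX_imp_weyl_supp[OF assms(1)] by force
  then have "(\<Sum>j\<in>?J. wconst (Rep_weyl_alg z 0 j) * wY ^ j) = (\<Sum>j\<in>{0}. wconst (Rep_weyl_alg z 0 j) * wY ^ j)"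
    by (intro sum.mono_neutral_left) (auto simp: weyl_alg_rep.scalar_zero image_iff weyl_supp_def)
  then show ?thesis
    using weyl_alg_eq_sum_wY_powers[OF assms(2)] by simp
qed

lemma Rep_weyl_alg_wconst_0_0: "Rep_weyl_alg (wconst c) 0 0 = c"
  by (simp add: wconst.rep_eq weyl_smult_def weyl_one_def)

definition weyl_degree_less :: "nat \<Rightarrow> 'a::field_char_0 weyl_alg \<Rightarrow> bool" where
  "weyl_degree_less n a \<longleftrightarrow> (\<forall>i j. Rep_weyl_alg a i j \<noteq> 0 \<longrightarrow> i + j < n)"

lemma weyl_degree_less_exists: "\<exists>n. weyl_degree_less n a"
proof -
  have "finite ((\<lambda>(i, j). i + j) ` weyl_supp (Rep_weyl_alg a))"
    using Rep_weyl_alg[of a] by (simp add: weyl_carrier_iff)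
  then obtain n where "\<forall>k\<in>(\<lambda>(i, j). i + j) ` weyl_supp (Rep_weyl_alg a). k < n"
    by (auto simp: finite_nat_set_iff_bounded)
  then have "weyl_degree_less n a"
    unfolding weyl_degree_less_def by (metis (mono_tags) case_prod_conv image_eqI in_weyl_supp_iff)
  then show ?thesis ..
qed

lemma weyl_degree_less_0: "weyl_degree_less 0 a \<Longrightarrow> a = 0"
  by (auto simp: weyl_degree_less_def Rep_weyl_alg_inject[symmetric] zero_weyl_alg.rep_eq
      weyl_zero_def fun_eq_iff)

lemma weyl_degree_less_commutators:
  assumes "weyl_degree_less (Suc n) z"
  shows "weyl_degree_less n (z * wX - wX * z)" and "weyl_degree_less n (wY * z - z * wY)"
  using assms[unfolded weyl_degree_less_def, rule_format]
  by (fastforce simp: weyl_degree_less_def Rep_weyl_alg_commutator_wX Rep_weyl_alg_commutator_wY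
      simp del: of_nat_Suc)+

text \<open>This is the simplicity of the Weyl algebra in characteristic zero.\<close>
lemma weyl_alg_commutator_closed_eq_0:
  fixes Z :: "'a::field_char_0 weyl_alg set"
  assumes comm_X: "\<And>z. z \<in> Z \<Longrightarrow> z * wX - wX * z \<in> Z"
    and comm_Y: "\<And>z. z \<in> Z \<Longrightarrow> wY * z - z * wY \<in> Z"
    and const: "\<And>c. wconst c \<in> Z \<Longrightarrow> c = 0"
    and "z \<in> Z"
  shows "z = 0"
proof -
  have "\<forall>z\<in>Z. weyl_degree_less n z \<longrightarrow> z = 0" for n
  proof (induction n)
    case 0
    then show ?case
      using weyl_degree_less_0 by blast
  next
    case (Suc n)
    show ?case
    proof (intro ballI impI)
      fix z assume "z \<in> Z" "weyl_degree_less (Suc n) z"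
      then have "z * wX - wX * z = 0" "wY * z - z * wY = 0"
        using Suc.IH weyl_degree_less_commutators comm_X comm_Y by blast+
      then have "z = wconst (Rep_weyl_alg z 0 0)"
        by (intro weyl_alg_central_eq_wconst) simp_all
      with \<open>z \<in> Z\<close> const show "z = 0"
        by (metis weyl_alg_rep.scalar_zero)
    qed
  qed
  then show ?thesis
    using \<open>z \<in> Z\<close> weyl_degree_less_exists by blast
qed

lemma weyl_subst_inj:
  assumes rel: "y * x = x * y + 1" and eq: "weyl_subst x y a = weyl_subst x y b"
  shows "a = b"
proof -
  have "a - b = 0"
  proof (rule weyl_alg_commutator_closed_eq_0[where Z = "{z. weyl_subst x y z = 0}"])
    show "wconst c \<in> {z. weyl_subst x y z = 0} \<Longrightarrow> c = 0" for c
      by (metis mem_Collect_eq weyl_subst_wconst[OF rel] Rep_weyl_alg_wconst_0_0 weyl_alg_rep.scalar_zero)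
  qed (simp_all add: weyl_subst_diff[OF rel] weyl_subst_mult[OF rel] eq)
  then show ?thesis by simp
qed

lemma weyl_subst_surj:
  assumes rel: "y * x = x * y + 1"
    and "wX \<in> range (weyl_subst x y)" "wY \<in> range (weyl_subst x y)"
  shows "surj (weyl_subst x y)"
proof -
  obtain u v where u: "weyl_subst x y u = wX" and v: "weyl_subst x y v = wY"
    using assms(2,3) by (metis rangeE)
  have "weyl_subst x y (weyl_subst u v a) = a" for a
    unfolding weyl_subst_weyl_subst[OF rel] u v weyl_subst_generators ..
  then show ?thesis
    by (metis surjI)
qed

lemma Abs_weyl_alg_mult:
  "f \<in> weyl_carrier \<Longrightarrow> g \<in> weyl_carrier \<Longrightarrow> Abs_weyl_alg (weyl_mult f g) = Abs_weyl_alg f * Abs_weyl_alg g"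
  by (metis times_weyl_alg.rep_eq Abs_weyl_alg_inverse Rep_weyl_alg_inverse)

lemma Abs_weyl_alg_add:
  "f \<in> weyl_carrier \<Longrightarrow> g \<in> weyl_carrier \<Longrightarrow> Abs_weyl_alg (weyl_add f g) = Abs_weyl_alg f + Abs_weyl_alg g"
  by (metis plus_weyl_alg.rep_eq Abs_weyl_alg_inverse Rep_weyl_alg_inverse)

lemma Abs_weyl_alg_smult:
  "f \<in> weyl_carrier \<Longrightarrow> Abs_weyl_alg (weyl_smult c f) = wconst c * Abs_weyl_alg f"
  by (metis Rep_weyl_alg_wconst_mult Abs_weyl_alg_inverse Rep_weyl_alg_inverse)

lemma bij_betw_weyl_subst_carrier:
  fixes x y :: "'a::field_char_0 weyl_alg"
  assumes rel: "y * x = x * y + 1" and surj: "surj (weyl_subst x y)"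
  shows "bij_betw (\<lambda>f. Rep_weyl_alg (weyl_subst x y (Abs_weyl_alg f))) weyl_carrier weyl_carrier"
proof (rule bij_betw_imageI)
  show "inj_on (\<lambda>f. Rep_weyl_alg (weyl_subst x y (Abs_weyl_alg f))) weyl_carrier"
    by (rule inj_onI)
      (simp add: Rep_weyl_alg_inject, metis weyl_subst_inj[OF rel] Abs_weyl_alg_inject)
  show "(\<lambda>f. Rep_weyl_alg (weyl_subst x y (Abs_weyl_alg f))) ` weyl_carrier = weyl_carrier"
  proof
    show "(\<lambda>f. Rep_weyl_alg (weyl_subst x y (Abs_weyl_alg f))) ` weyl_carrier \<subseteq> weyl_carrier"
      using Rep_weyl_alg by auto
    show "weyl_carrier \<subseteq> (\<lambda>f. Rep_weyl_alg (weyl_subst x y (Abs_weyl_alg f))) ` weyl_carrier"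
    proof
      fix h :: "'a weyl" assume h: "h \<in> weyl_carrier"
      obtain w where "weyl_subst x y w = Abs_weyl_alg h"
        using surj by (metis surjD)
      then have "Rep_weyl_alg (weyl_subst x y (Abs_weyl_alg (Rep_weyl_alg w))) = h"
        using h by (simp add: Rep_weyl_alg_inverse Abs_weyl_alg_inverse)
      then show "h \<in> (\<lambda>f. Rep_weyl_alg (weyl_subst x y (Abs_weyl_alg f))) ` weyl_carrier"
        by (metis Rep_weyl_alg image_eqI)
    qed
  qed
qed

lemma weyl_subst_K_automorphism:
  assumes rel: "y * x = x * y + 1" and surj: "surj (weyl_subst x y)"
  shows "weyl_K_automorphism (\<lambda>f. Rep_weyl_alg (weyl_subst x y (Abs_weyl_alg f)))"
proof -
  let ?t = "\<lambda>f. Rep_weyl_alg (weyl_subst x y (Abs_weyl_alg f))"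
  have "?t \<in> ring_iso weyl_ring weyl_ring"
  proof (rule ring_iso_memI)
    show "?t f \<in> carrier weyl_ring" for f
      by (simp add: weyl_ring_def Rep_weyl_alg)
    show "?t (f \<otimes>\<^bsub>weyl_ring\<^esub> g) = ?t f \<otimes>\<^bsub>weyl_ring\<^esub> ?t g"
      if "f \<in> carrier weyl_ring" "g \<in> carrier weyl_ring" for f g
      using that by (simp add: weyl_ring_def Abs_weyl_alg_mult weyl_subst_mult[OF rel] times_weyl_alg.rep_eq)
    show "?t (f \<oplus>\<^bsub>weyl_ring\<^esub> g) = ?t f \<oplus>\<^bsub>weyl_ring\<^esub> ?t g"
      if "f \<in> carrier weyl_ring" "g \<in> carrier weyl_ring" for f g
      using that by (simp add: weyl_ring_def Abs_weyl_alg_add weyl_subst_add[OF rel] plus_weyl_alg.rep_eq)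
    show "?t \<one>\<^bsub>weyl_ring\<^esub> = \<one>\<^bsub>weyl_ring\<^esub>"
      by (simp add: weyl_ring_def one_weyl_alg.abs_eq[symmetric] weyl_subst_one[OF rel] one_weyl_alg.rep_eq)
    show "bij_betw ?t (carrier weyl_ring) (carrier weyl_ring)"
      using bij_betw_weyl_subst_carrier[OF rel surj] by (simp add: weyl_ring_def)
  qed
  moreover have "\<forall>c. \<forall>f\<in>weyl_carrier. ?t (weyl_smult c f) = weyl_smult c (?t f)"
    by (simp add: Abs_weyl_alg_smult weyl_subst_wconst_mult[OF rel] Rep_weyl_alg_wconst_mult)
  ultimately show ?thesis
    unfolding weyl_K_automorphism_def by blast
qed

section \<open>Automorphisms from scaled generators\<close>

lemma wconst_uminus: "wconst (- c) = - wconst c"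
  using weyl_alg_rep.scalar_diff[of 0 c] by (simp add: weyl_alg_rep.scalar_zero)

lemma wconst_eq_0_iff: "wconst c = 0 \<longleftrightarrow> c = 0"
  by (metis Rep_weyl_alg_wconst_0_0 weyl_alg_rep.scalar_zero)

lemma wconst_inverse_mult_cancel: "l \<noteq> 0 \<Longrightarrow> wconst (inverse l) * (wconst l * a) = a"
  by (simp add: mult.assoc[symmetric] weyl_alg_rep.scalar_one flip: weyl_alg_rep.scalar_mult)

lemma commutator_wconst_mult_left:
  "(wconst l * g) * a - a * (wconst l * g) = wconst l * (g * a - a * g)"
  by (simp add: right_diff_distrib mult.assoc weyl_alg_rep.scalar_mult_middle)

lemma wconst_mult_in_range_weyl_subst:
  assumes "y * x = x * y + 1" "a \<in> range (weyl_subst x y)"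
  shows "wconst c * a \<in> range (weyl_subst x y)"
  using assms by (metis rangeE rangeI weyl_subst_wconst_mult)

context
  fixes x y :: "'a::field_char_0 weyl_alg"
  assumes weyl_rel: "y * x = x * y + 1"
begin

text \<open>\<open>z - c wY\<close> commutes with \<open>wX\<close>, hence is a polynomial in \<open>wX\<close>.\<close>
lemma wY_in_range_weyl_subst:
  assumes X: "wX \<in> range (weyl_subst x y)" and z: "z \<in> range (weyl_subst x y)"
    and comm: "z * wX - wX * z = wconst c" and c: "c \<noteq> 0"
  shows "wY \<in> range (weyl_subst x y)"
proof -
  obtain u w where u: "weyl_subst x y u = wX" and w: "weyl_subst x y w = z"
    using X z by (metis rangeE)
  define r where "r = z - wconst c * wY"
  have "r * wX - wX * r = (z * wX - wX * z) - wconst c * (wY * wX - wX * wY)"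
    by (simp add: r_def algebra_simps weyl_alg_rep.scalar_mult_middle)
  then have "r * wX = wX * r"
    by (simp add: comm wY_wX_rel)
  then have "r = (\<Sum>i\<in>fst ` weyl_supp (Rep_weyl_alg r). wconst (Rep_weyl_alg r i 0) * wX ^ i)"
    by (rule weyl_alg_eq_sum_wX_powers)
  also have "\<dots> = weyl_subst x y (\<Sum>i\<in>fst ` weyl_supp (Rep_weyl_alg r). wconst (Rep_weyl_alg r i 0) * u ^ i)"
    by (simp add: weyl_subst_sum[OF weyl_rel] weyl_subst_wconst_mult[OF weyl_rel]
        weyl_subst_power[OF weyl_rel] u)
  finally obtain P where P: "weyl_subst x y P = r"
    by metis
  have "wY = wconst (inverse c) * (z - r)"
    by (simp add: r_def diff_diff_eq2 wconst_inverse_mult_cancel c)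
  also have "\<dots> = weyl_subst x y (wconst (inverse c) * (w - P))"
    by (simp add: weyl_subst_wconst_mult[OF weyl_rel] weyl_subst_diff[OF weyl_rel] w P)
  finally show ?thesis
    by (rule range_eqI)
qed

lemma wX_in_range_weyl_subst:
  assumes Y: "wY \<in> range (weyl_subst x y)" and z: "z \<in> range (weyl_subst x y)"
    and comm: "wY * z - z * wY = wconst c" and c: "c \<noteq> 0"
  shows "wX \<in> range (weyl_subst x y)"
proof -
  obtain v w where v: "weyl_subst x y v = wY" and w: "weyl_subst x y w = z"
    using Y z by (metis rangeE)
  define r where "r = z - wconst c * wX"
  have "wY * r - r * wY = (wY * z - z * wY) - wconst c * (wY * wX - wX * wY)"
    by (simp add: r_def algebra_simps weyl_alg_rep.scalar_mult_middle)
  then have "wY * r = r * wY"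
    by (simp add: comm wY_wX_rel)
  then have "r = (\<Sum>j\<in>snd ` weyl_supp (Rep_weyl_alg r). wconst (Rep_weyl_alg r 0 j) * wY ^ j)"
    by (rule weyl_alg_eq_sum_wY_powers)
  also have "\<dots> = weyl_subst x y (\<Sum>j\<in>snd ` weyl_supp (Rep_weyl_alg r). wconst (Rep_weyl_alg r 0 j) * v ^ j)"
    by (simp add: weyl_subst_sum[OF weyl_rel] weyl_subst_wconst_mult[OF weyl_rel]
        weyl_subst_power[OF weyl_rel] v)
  finally obtain P where P: "weyl_subst x y P = r"
    by metis
  have "wX = wconst (inverse c) * (z - r)"
    by (simp add: r_def diff_diff_eq2 wconst_inverse_mult_cancel c)
  also have "\<dots> = weyl_subst x y (wconst (inverse c) * (w - P))"
    by (simp add: weyl_subst_wconst_mult[OF weyl_rel] weyl_subst_diff[OF weyl_rel] w P)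
  finally show ?thesis
    by (rule range_eqI)
qed

lemma generators_in_range_of_scaled_wX:
  assumes "wconst l * wX \<in> range (weyl_subst x y)" and "z \<in> range (weyl_subst x y)"
    and comm: "wconst l * (wX * z - z * wX) = wconst e" and "e \<noteq> 0"
  shows "wX \<in> range (weyl_subst x y) \<and> wY \<in> range (weyl_subst x y)"
proof -
  have l: "l \<noteq> 0"
    using comm \<open>e \<noteq> 0\<close> by (auto simp: wconst_eq_0_iff weyl_alg_rep.scalar_zero)
  have X: "wX \<in> range (weyl_subst x y)"
    using wconst_mult_in_range_weyl_subst[OF weyl_rel assms(1), of "inverse l"]
    by (simp add: wconst_inverse_mult_cancel l)
  have "wX * z - z * wX = wconst (inverse l * e)"
    using arg_cong[OF comm, of "\<lambda>a. wconst (inverse l) * a"]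
    by (simp add: wconst_inverse_mult_cancel l weyl_alg_rep.scalar_mult)
  then have "z * wX - wX * z = wconst (- (inverse l * e))"
    by (metis minus_diff_eq wconst_uminus)
  then show ?thesis
    using wY_in_range_weyl_subst[OF X assms(2)] X l \<open>e \<noteq> 0\<close> by simp
qed

lemma generators_in_range_of_scaled_wY:
  assumes "wconst l * wY \<in> range (weyl_subst x y)" and "z \<in> range (weyl_subst x y)"
    and comm: "wconst l * (wY * z - z * wY) = wconst e" and "e \<noteq> 0"
  shows "wX \<in> range (weyl_subst x y) \<and> wY \<in> range (weyl_subst x y)"
proof -
  have l: "l \<noteq> 0"
    using comm \<open>e \<noteq> 0\<close> by (auto simp: wconst_eq_0_iff weyl_alg_rep.scalar_zero)
  have Y: "wY \<in> range (weyl_subst x y)"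
    using wconst_mult_in_range_weyl_subst[OF weyl_rel assms(1), of "inverse l"]
    by (simp add: wconst_inverse_mult_cancel l)
  have "wY * z - z * wY = wconst (inverse l * e)"
    using arg_cong[OF comm, of "\<lambda>a. wconst (inverse l) * a"]
    by (simp add: wconst_inverse_mult_cancel l weyl_alg_rep.scalar_mult)
  then show ?thesis
    using wX_in_range_weyl_subst[OF Y assms(2)] Y l \<open>e \<noteq> 0\<close> by simp
qed

end

lemma generators_in_range_weyl_subst:
  fixes p q :: "'a::field_char_0 weyl_alg"
  assumes rel: "p * q = q * p + 1"
    and "p = wconst l * wX \<or> p = wconst l * wY \<or> q = wconst l * wX \<or> q = wconst l * wY"
  shows "wX \<in> range (weyl_subst q p) \<and> wY \<in> range (weyl_subst q p)"
proof -
  have p: "p \<in> range (weyl_subst q p)" and q: "q \<in> range (weyl_subst q p)"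
    using weyl_subst_wY[OF rel] weyl_subst_wX[OF rel] by (metis rangeI)+
  have pq: "p * q - q * p = wconst 1" and qp: "q * p - p * q = wconst (- 1)"
    using rel by (simp_all add: weyl_alg_rep.scalar_one wconst_uminus)
  consider "p = wconst l * wX" | "p = wconst l * wY" | "q = wconst l * wX" | "q = wconst l * wY"
    using assms(2) by blast
  then show ?thesis
  proof cases
    case 1
    then show ?thesis
      using generators_in_range_of_scaled_wX[OF rel, of l q 1] p q pq
      by (simp add: commutator_wconst_mult_left)
  next
    case 2
    then show ?thesis
      using generators_in_range_of_scaled_wY[OF rel, of l q 1] p q pq
      by (simp add: commutator_wconst_mult_left)
  next
    case 3
    then show ?thesis
      using generators_in_range_of_scaled_wX[OF rel, of l p "- 1"] p q qp
      by (simp add: commutator_wconst_mult_left)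
  next
    case 4
    then show ?thesis
      using generators_in_range_of_scaled_wY[OF rel, of l p "- 1"] p q qp
      by (simp add: commutator_wconst_mult_left)
  qed
qed

section \<open>Homogeneous elements\<close>

definition falling_poly :: "nat \<Rightarrow> 'a::field poly" where
  "falling_poly j = (\<Prod>k<j. [:- of_nat k, 1:])"

lemma poly_falling_poly: "poly (falling_poly j) x = (\<Prod>k<j. x - of_nat k)"
  by (simp add: falling_poly_def poly_prod)

lemma poly_falling_poly_of_nat: "poly (falling_poly j) (of_nat n :: 'a::field) = (\<Prod>k<j. of_nat (n - k))"
proof (cases "j \<le> n")
  case True
  then show ?thesis
    by (simp add: poly_falling_poly of_nat_diff)
next
  case False
  then have "(\<Prod>k<j. (of_nat n - of_nat k :: 'a)) = 0" "(\<Prod>k<j. (of_nat (n - k) :: 'a)) = 0"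
    by (auto intro!: prod_zero bexI[of _ n])
  then show ?thesis
    by (simp only: poly_falling_poly)
qed

text \<open>The degree \<open>d\<close> component of \<open>f\<close> maps \<open>t ^ n\<close> to \<open>component_poly f d (n) * t ^ (n + d)\<close>.\<close>
definition component_poly :: "'a::field weyl \<Rightarrow> int \<Rightarrow> 'a poly" where
  "component_poly f d =
    (\<Sum>(i, j)\<in>weyl_supp f. if int i - int j = d then smult (f i j) (falling_poly j) else 0)"

definition op_coeff :: "'a::field_char_0 weyl_alg \<Rightarrow> nat \<Rightarrow> nat \<Rightarrow> 'a" where
  "op_coeff a n m = coeff (lapply (weyl_action a) (monom 1 n)) m"

lemma op_coeff_eq_poly:
  "op_coeff a n m = poly (component_poly (Rep_weyl_alg a) (int m - int n)) (of_nat n)"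
proof -
  have "op_coeff a n m = (\<Sum>(i, j)\<in>weyl_supp (Rep_weyl_alg a).
      Rep_weyl_alg a i j * (if m = i + (n - j) then \<Prod>k<j. of_nat (n - k) else 0))"
    by (simp add: op_coeff_def weyl_action_def coeff_linop_rep_eval)
  also have "\<dots> = poly (component_poly (Rep_weyl_alg a) (int m - int n)) (of_nat n)"
    unfolding component_poly_def poly_sum
  proof (intro sum.cong refl, clarify)
    fix i j
    show "Rep_weyl_alg a i j * (if m = i + (n - j) then \<Prod>k<j. of_nat (n - k) else 0) =
        poly (if int i - int j = int m - int n then smult (Rep_weyl_alg a i j) (falling_poly j) else 0) (of_nat n)"
    proof (cases "j \<le> n")
      case True
      then have "m = i + (n - j) \<longleftrightarrow> int i - int j = int m - int n" by linarith
      then show ?thesis by (simp add: poly_falling_poly_of_nat)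
    qed (auto simp: poly_falling_poly_of_nat prod_zero_iff)
  qed
  finally show ?thesis .
qed

lemma coeff_lapply_expand:
  assumes "degree q \<le> D"
  shows "coeff (lapply F q) m = (\<Sum>k\<le>D. coeff q k * coeff (lapply F (monom 1 k)) m)"
proof -
  have "q = (\<Sum>k\<le>D. smult (coeff q k) (monom 1 k))"
    using poly_as_sum_of_monoms'[OF assms] by (simp add: smult_monom)
  then have "lapply F q = (\<Sum>k\<le>D. smult (coeff q k) (lapply F (monom 1 k)))"
    by (metis (no_types, lifting) lapply_psum lapply_smult sum.cong)
  then show ?thesis
    by (simp add: coeff_sum)
qed

lemma op_coeff_mult:
  "op_coeff (a * b) n m =
    (\<Sum>k\<le>degree (lapply (weyl_action b) (monom 1 n)). op_coeff b n k * op_coeff a k m)"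
  unfolding op_coeff_def weyl_action_mult lapply_mult
  by (rule coeff_lapply_expand) simp

lemma op_coeff_beyond_degree:
  "degree (lapply (weyl_action b) (monom 1 n)) < k \<Longrightarrow> op_coeff b n k = 0"
  unfolding op_coeff_def by (simp add: coeff_eq_0)

lemma op_coeff_diff: "op_coeff (a - b) n m = op_coeff a n m - op_coeff b n m"
  by (simp add: op_coeff_def weyl_action_diff minus_linop.rep_eq coeff_diff)

lemma op_coeff_wconst: "op_coeff (wconst c) n m = (if m = n then c else 0)"
  by (simp add: op_coeff_def weyl_action_wconst coeff_monom)

lemma component_poly_eq_0:
  "weyl_component d f = f \<Longrightarrow> e \<noteq> d \<Longrightarrow> component_poly f e = 0"
  unfolding component_poly_def
  by (intro sum.neutral) (auto simp: weyl_component_def fun_eq_iff split: if_splits, metis)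

lemma op_coeff_homogeneous_eq_0:
  "weyl_component d (Rep_weyl_alg a) = Rep_weyl_alg a \<Longrightarrow> int m - int n \<noteq> d \<Longrightarrow> op_coeff a n m = 0"
  by (simp add: op_coeff_eq_poly component_poly_eq_0)

lemma sum_atMost_single:
  fixes D k0 :: nat
  assumes "\<And>k. k \<noteq> k0 \<Longrightarrow> f k = 0" and "D < k0 \<Longrightarrow> f k0 = 0"
  shows "(\<Sum>k\<le>D. f k) = f k0"
proof (cases "k0 \<le> D")
  case True
  then show ?thesis
    using assms(1) by (subst sum.remove[of _ k0]) (auto intro!: sum.neutral)
next
  case False
  then show ?thesis
    using assms by (auto intro!: sum.neutral)
qed

lemma op_coeff_mult_homogeneous_left:
  assumes hom: "weyl_component d (Rep_weyl_alg a) = Rep_weyl_alg a"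
  shows "op_coeff (a * b) n m =
    (if d \<le> int m then op_coeff b n (nat (int m - d)) * op_coeff a (nat (int m - d)) m else 0)"
proof (cases "d \<le> int m")
  case True
  then show ?thesis
    unfolding op_coeff_mult
    by (subst sum_atMost_single[of "nat (int m - d)"])
      (auto simp: op_coeff_homogeneous_eq_0[OF hom] op_coeff_beyond_degree)
next
  case False
  then show ?thesis
    unfolding op_coeff_mult by (auto simp: op_coeff_homogeneous_eq_0[OF hom] intro!: sum.neutral)
qed

lemma op_coeff_mult_homogeneous_right:
  assumes hom: "weyl_component d (Rep_weyl_alg a) = Rep_weyl_alg a"
  shows "op_coeff (b * a) n m =
    (if 0 \<le> int n + d then op_coeff a n (nat (int n + d)) * op_coeff b (nat (int n + d)) m else 0)"
proof (cases "0 \<le> int n + d")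
  case True
  then show ?thesis
    unfolding op_coeff_mult
    by (subst sum_atMost_single[of "nat (int n + d)"])
      (auto simp: op_coeff_homogeneous_eq_0[OF hom] op_coeff_beyond_degree)
next
  case False
  then show ?thesis
    unfolding op_coeff_mult by (auto simp: op_coeff_homogeneous_eq_0[OF hom] intro!: sum.neutral)
qed

lemma homogeneous_commutator_diagonal:
  assumes hom: "weyl_component d (Rep_weyl_alg a) = Rep_weyl_alg a"
    and comm: "a * b - b * a = wconst c"
  defines "A \<equiv> component_poly (Rep_weyl_alg a) d" and "B \<equiv> component_poly (Rep_weyl_alg b) (- d)"
  shows "c = (if d \<le> int n then poly B (of_nat n) * poly A (of_nat n - of_int d) else 0)
    - (if 0 \<le> int n + d then poly A (of_nat n) * poly B (of_nat n + of_int d) else 0)"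
proof -
  have "c = op_coeff (a * b) n n - op_coeff (b * a) n n"
    using op_coeff_wconst[of c n n] by (simp add: op_coeff_diff flip: comm)
  then show ?thesis
    unfolding op_coeff_mult_homogeneous_left[OF hom] op_coeff_mult_homogeneous_right[OF hom]
    by (simp add: op_coeff_eq_poly A_def B_def of_nat_nat)
qed

lemma poly_eq_0_if_roots_inj:
  fixes p :: "'a::idom poly"
  assumes "inj f" and "\<And>k::nat. poly p (f k) = 0"
  shows "p = 0"
proof (rule ccontr)
  assume "p \<noteq> 0"
  then have "finite {x. poly p x = 0}"
    by (rule poly_roots_finite)
  moreover have "range f \<subseteq> {x. poly p x = 0}"
    using assms(2) by auto
  ultimately show False
    using assms(1) finite_subset finite_imageD by blast
qed

lemma poly_linear_if_shift_difference_const: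
  fixes G :: "'a::field_char_0 poly"
  assumes shift: "\<And>x. poly G (x - d) - poly G x = c" and d: "d \<noteq> 0"
  shows "G = [:poly G 0, - c / d:]"
proof -
  have iter: "poly G (of_nat k * d) = poly G 0 - of_nat k * c" for k
  proof (induction k)
    case (Suc k)
    have "poly G (of_nat (Suc k) * d - d) - poly G (of_nat (Suc k) * d) = c"
      by (rule shift)
    then show ?case
      using Suc by (simp add: algebra_simps)
  qed simp
  have "G - [:poly G 0, - c / d:] = 0"
    by (rule poly_eq_0_if_roots_inj[of "\<lambda>k. of_nat k * d"])
      (use d iter in \<open>auto intro!: injI simp: field_simps\<close>)
  then show ?thesis
    by simp
qed

lemma const_factor_of_linear_product:
  fixes A B :: "'a::field poly"
  assumes AB: "A * B = [:b, a:]" and a: "a \<noteq> 0" and root: "poly B r = 0"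
  shows "\<exists>l. l \<noteq> 0 \<and> A = [:l:]"
proof -
  have "A \<noteq> 0" "B \<noteq> 0"
    using AB a by auto
  moreover have "degree B \<noteq> 0"
  proof
    assume "degree B = 0"
    then have "B = [:poly B r:]"
      by (metis degree_eq_zeroE poly_pCons poly_0 mult_zero_right add.right_neutral)
    then show False
      using \<open>B \<noteq> 0\<close> root by simp
  qed
  moreover have "degree (A * B) = 1"
    using AB a by simp
  ultimately have "degree A = 0"
    by (simp add: degree_mult_eq)
  then show ?thesis
    using \<open>A \<noteq> 0\<close> by (metis degree_eq_zeroE pCons_eq_0_iff)
qed

context
  fixes A B :: "'a::field_char_0 poly" and c :: 'a and d :: int
  assumes diagonal: "\<And>n::nat. c =
    (if d \<le> int n then poly B (of_nat n) * poly A (of_nat n - of_int d) else 0)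
    - (if 0 \<le> int n + d then poly A (of_nat n) * poly B (of_nat n + of_int d) else 0)"
    and c: "c \<noteq> 0"
begin

text \<open>For large \<open>n\<close> the diagonal identity says \<open>G (n - d) - G n = c\<close>, so \<open>G\<close> is linear with slope \<open>- c / d\<close>.\<close>
lemma commutator_poly_linear:
  defines "G \<equiv> A * pcompose B [:of_int d, 1:]"
  shows "d \<noteq> 0" and "G = [:poly G 0, - c / of_int d:]"
proof -
  have pG: "poly G x = poly A x * poly B (x + of_int d)" for x
    unfolding G_def by (simp add: poly_pcompose add.commute)
  show d: "d \<noteq> 0"
    using diagonal[of 0] c by auto
  define R where "R = pcompose G [:- of_int d, 1:] - G - [:c:]"
  have "R = 0"
  proof (rule poly_eq_0_if_roots_inj[of "\<lambda>k. of_nat (k + nat \<bar>d\<bar>)"])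
    show "inj (\<lambda>k. (of_nat (k + nat \<bar>d\<bar>) :: 'a))"
      by (auto intro!: injI)
    fix k
    have "d \<le> int (k + nat \<bar>d\<bar>)" "0 \<le> int (k + nat \<bar>d\<bar>) + d"
      by linarith+
    then show "poly R (of_nat (k + nat \<bar>d\<bar>)) = 0"
      using diagonal[of "k + nat \<bar>d\<bar>"]
      by (simp add: R_def poly_pcompose pG algebra_simps del: of_nat_add)
  qed
  then have "poly R x = 0" for x
    by simp
  then have "poly G (x - of_int d) - poly G x = c" for x
    by (simp add: R_def poly_pcompose algebra_simps)
  then show "G = [:poly G 0, - c / of_int d:]"
    using d by (intro poly_linear_if_shift_difference_const) simp_all
qed

lemma commutator_poly_pos:
  assumes d: "0 < d" and B0: "poly B 0 = 0"
  shows "d = 1 \<and> (\<exists>l. l \<noteq> 0 \<and> A = [:l:])"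
proof -
  define G where "G = A * pcompose B [:of_int d, 1:]"
  have pG: "poly G x = poly A x * poly B (x + of_int d)" for x
    unfolding G_def by (simp add: poly_pcompose add.commute)
  have G: "G = [:poly G 0, - c / of_int d:]"
    using commutator_poly_linear(2) unfolding G_def by blast
  have c0: "c = - poly G 0"
    using diagonal[of 0] d by (simp add: pG)
  have "d = 1"
  proof (rule ccontr)
    assume "d \<noteq> 1"
    then have "c = - poly G 1"
      using diagonal[of 1] d by (simp add: pG add.commute)
    then show False
      using arg_cong[OF G, of "\<lambda>p. poly p 1"] c0 c d by simp
  qed
  moreover have "A * pcompose B [:1, 1:] = [:- c, - c:]"
    using G c0 \<open>d = 1\<close> by (simp add: G_def)
  moreover have "poly (pcompose B [:1, 1:]) (- 1) = 0"
    using B0 by (simp add: poly_pcompose)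
  ultimately have "\<exists>l. l \<noteq> 0 \<and> A = [:l:]"
    using c const_factor_of_linear_product[where a = "- c" and b = "- c" and r = "- 1"] by simp
  with \<open>d = 1\<close> show ?thesis ..
qed

lemma commutator_poly_neg:
  assumes d: "d < 0" and A0: "poly A 0 = 0"
  shows "d = -1 \<and> (\<exists>l. l \<noteq> 0 \<and> A = [:0, l:])"
proof -
  define G where "G = A * pcompose B [:of_int d, 1:]"
  have pG: "poly G x = poly A x * poly B (x + of_int d)" for x
    unfolding G_def by (simp add: poly_pcompose add.commute)
  have G: "G = [:poly G 0, - c / of_int d:]"
    using commutator_poly_linear(2) unfolding G_def by blast
  have Gx: "poly G x = poly G 0 - c / of_int d * x" for x
    by (subst G) (simp add: algebra_simps)
  have "c = poly G (- of_int d)"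
    using diagonal[of 0] d by (simp add: pG)
  then have g0: "poly G 0 = 0"
    using Gx[of "- of_int d"] d by (simp add: field_simps)
  have "d = -1"
  proof (rule ccontr)
    assume "d \<noteq> -1"
    then have "c = poly G (1 - of_int d)"
      using diagonal[of 1] d by (simp add: pG mult.commute)
    then show False
      using Gx[of "1 - of_int d"] g0 d c by (simp add: field_simps)
  qed
  then have "pcompose B [:- 1, 1:] * A = [:0, c:]"
    using G g0 by (simp add: G_def mult.commute)
  then obtain \<mu> where "\<mu> \<noteq> 0" "pcompose B [:- 1, 1:] = [:\<mu>:]"
    using const_factor_of_linear_product[where r = 0] c A0 by blast
  with \<open>d = -1\<close> have "smult \<mu> A = [:0, c:]"
    using G g0 by (simp add: G_def)
  then have "A = smult (inverse \<mu>) [:0, c:]"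
    using \<open>\<mu> \<noteq> 0\<close> by (metis smult_smult left_inverse smult_1_left)
  then show ?thesis
    using \<open>d = -1\<close> \<open>\<mu> \<noteq> 0\<close> c by simp
qed

end

lemma component_poly_negative_at_0:
  assumes "d < 0"
  shows "poly (component_poly f d) 0 = (0::'a::field)"
  unfolding component_poly_def poly_sum
proof (intro sum.neutral ballI, clarify)
  fix i j
  show "poly (if int i - int j = d then smult (f i j) (falling_poly j) else 0) 0 = 0"
    using assms by (auto simp: poly_falling_poly intro!: prod_zero bexI[of _ 0])
qed

lemma weyl_alg_eqI_component_poly:
  fixes a b :: "'a::field_char_0 weyl_alg"
  assumes "\<And>e. component_poly (Rep_weyl_alg a) e = component_poly (Rep_weyl_alg b) e"
  shows "a = b"
proof (rule weyl_action_inj, rule linop_eqI, rule poly_eqI)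
  fix q m
  have expand: "coeff (lapply (weyl_action z) q) m = (\<Sum>k\<le>degree q. coeff q k * op_coeff z k m)"
    for z :: "'a weyl_alg"
    unfolding op_coeff_def by (rule coeff_lapply_expand[OF order_refl])
  have "op_coeff a k m = op_coeff b k m" for k
    by (simp add: op_coeff_eq_poly assms)
  then show "coeff (lapply (weyl_action a) q) m = coeff (lapply (weyl_action b) q) m"
    by (simp only: expand)
qed

lemma component_poly_wconst_wX:
  "component_poly (Rep_weyl_alg (wconst l * wX)) e = (if e = 1 then [:l:] else 0)"
proof -
  have "weyl_supp (weyl_smult l weyl_X) = (if l = 0 then {} else {(1, 0)})"
    by (auto simp: weyl_supp_def weyl_smult_def weyl_X_def split: if_splits)
  then show ?thesis
    by (simp add: component_poly_def Rep_weyl_alg_wconst_mult wX.rep_eq falling_poly_def weyl_smult_def weyl_X_def)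
qed

lemma component_poly_wconst_wY:
  "component_poly (Rep_weyl_alg (wconst l * wY)) e = (if e = -1 then [:0, l:] else 0)"
proof -
  have "weyl_supp (weyl_smult l weyl_Y) = (if l = 0 then {} else {(0, 1)})"
    by (auto simp: weyl_supp_def weyl_smult_def weyl_Y_def split: if_splits)
  then show ?thesis
    by (simp add: component_poly_def Rep_weyl_alg_wconst_mult wY.rep_eq falling_poly_def weyl_smult_def weyl_Y_def)
qed

lemma homogeneous_commutator_generator:
  fixes a b :: "'a::field_char_0 weyl_alg"
  assumes hom: "weyl_component d (Rep_weyl_alg a) = Rep_weyl_alg a"
    and comm: "a * b - b * a = wconst c" and c: "c \<noteq> 0"
  shows "\<exists>l. l \<noteq> 0 \<and> (a = wconst l * wX \<or> a = wconst l * wY)"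
proof -
  let ?A = "component_poly (Rep_weyl_alg a) d" and ?B = "component_poly (Rep_weyl_alg b) (- d)"
  note diagonal = homogeneous_commutator_diagonal[OF hom comm]
  have other: "component_poly (Rep_weyl_alg a) e = 0" if "e \<noteq> d" for e
    using component_poly_eq_0[OF hom that] .
  consider "0 < d" | "d < 0"
    using commutator_poly_linear(1)[OF diagonal c] by linarith
  then show ?thesis
  proof cases
    case 1
    then obtain l where "d = 1" "l \<noteq> 0" "?A = [:l:]"
      using commutator_poly_pos[OF diagonal c 1] by (auto simp: component_poly_negative_at_0)
    then have "a = wconst l * wX"
      using other by (intro weyl_alg_eqI_component_poly) (simp add: component_poly_wconst_wX)
    then show ?thesis
      using \<open>l \<noteq> 0\<close> by blast
  next
    case 2
    then obtain l where "d = -1" "l \<noteq> 0" "?A = [:0, l:]"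
      using commutator_poly_neg[OF diagonal c 2] by (auto simp: component_poly_negative_at_0)
    then have "a = wconst l * wY"
      using other by (intro weyl_alg_eqI_component_poly) (simp add: component_poly_wconst_wY)
    then show ?thesis
      using \<open>l \<noteq> 0\<close> by blast
  qed
qed

lemma weyl_mass_one_imp_homogeneous:
  assumes "weyl_mass f = 1"
  shows "\<exists>d. weyl_component d f = f"
proof -
  obtain d where d: "{d::int. weyl_component d f \<noteq> weyl_zero} = {d}"
    using assms unfolding weyl_mass_def by (meson card_1_singletonE)
  have "f i j = 0" if "int i - int j \<noteq> d" for i j
  proof (rule ccontr)
    assume "f i j \<noteq> 0"
    then have "weyl_component (int i - int j) f \<noteq> weyl_zero"
      by (auto simp: weyl_component_def weyl_zero_def fun_eq_iff)
    then show False
      using d that by blast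
  qed
  then have "weyl_component d f = f"
    by (auto simp: weyl_component_def fun_eq_iff)
  then show ?thesis ..
qed

theorem corollary2p4:
  fixes P Q :: "'a::field_char_0 weyl"
  assumes "P \<in> weyl_carrier" and "Q \<in> weyl_carrier"
    and "weyl_mass P = 1 \<or> weyl_mass Q = 1"
    and "weyl_sub (weyl_mult P Q) (weyl_mult Q P) = weyl_one"
  shows "\<exists>\<tau>. weyl_K_automorphism \<tau> \<and> P = \<tau> weyl_Y \<and> Q = \<tau> weyl_X"
proof -
  define p q where "p = Abs_weyl_alg P" and "q = Abs_weyl_alg Q"
  have P: "Rep_weyl_alg p = P" and Q: "Rep_weyl_alg q = Q"
    using assms(1,2) by (simp_all add: p_def q_def Abs_weyl_alg_inverse)
  have "Rep_weyl_alg (p * q - q * p) = Rep_weyl_alg 1"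
    using assms(4) by (simp add: minus_weyl_alg.rep_eq times_weyl_alg.rep_eq one_weyl_alg.rep_eq P Q)
  then have pq: "p * q - q * p = wconst 1"
    by (simp add: Rep_weyl_alg_inject weyl_alg_rep.scalar_one)
  then have qp: "q * p - p * q = wconst (- 1)"
    by (metis minus_diff_eq wconst_uminus)
  have rel: "p * q = q * p + 1"
    using pq by (simp add: weyl_alg_rep.scalar_one algebra_simps)
  obtain l where "p = wconst l * wX \<or> p = wconst l * wY \<or> q = wconst l * wX \<or> q = wconst l * wY"
    using assms(3) weyl_mass_one_imp_homogeneous
      homogeneous_commutator_generator[OF _ pq] homogeneous_commutator_generator[OF _ qp]
    by (metis P Q one_neq_zero neg_equal_0_iff_equal)
  then have "surj (weyl_subst q p)"
    using generators_in_range_weyl_subst[OF rel] weyl_subst_surj[OF rel] by blast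
  then have "weyl_K_automorphism (\<lambda>f. Rep_weyl_alg (weyl_subst q p (Abs_weyl_alg f)))"
    by (rule weyl_subst_K_automorphism[OF rel])
  moreover have "Abs_weyl_alg weyl_Y = wY" "Abs_weyl_alg weyl_X = wX"
    by (metis Rep_weyl_alg_inverse wY.rep_eq wX.rep_eq)+
  ultimately show ?thesis
    using weyl_subst_wX[OF rel] weyl_subst_wY[OF rel] P Q by metis
qed

end
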